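(* Let $j\in\mathbb Z$, and let $\lambda,\mu$ be partitions such that $\lambda$ has an addable node $\mathfrak l$ in column $j$ and $\mu$ has an addable node $\mathfrak m$ in column $j$; set $\lambda^+=\lambda\cup\{\mathfrak l\}$, $\mu^+=\mu\cup\{\mathfrak m\}$. Suppose $\lambda\supseteq\mu^+$, and let $\mathfrak a=\mathfrak l-(1,1)$. Then: (1) there exists a cover-expansive Dyck tiling of $\lambda\setminus\mu$ in which $\mathfrak a$ has depth $1$ if and only if there exists a cover-expansive Dyck tiling of $\lambda\setminus\mu^+$; (2) there exists a cover-expansive Dyck tiling of $\lambda\setminus\mu$ in which $\mathfrak a$ has depth greater than $1$ if and only if there exists a cover-expansive Dyck tiling of $\lambda^+\setminus\mu^+$.
   Context: Partitions are identified with Young diagrams $\{(a,b)\in\mathbb N^2:b\le\lambda_a\}$; nodes are elements of $\mathbb N^2$; $(a,b)$ has height $\operatorname{ht}(a,b)=a+b$ and lies in column $b-a$ (smaller column = further left). An addable node of $\lambda$ is a node not in $\lambda$ whose addition gives a partition. $\mathtt{NE}(\mathfrak n)=\mathfrak n+(0,1)$, $\mathtt{SW}(\mathfrak n)=\mathfrak n-(0,1)$, $\mathtt{SE}(\mathfrak n)=\mathfrak n-(1,0)$. A tile is a finite nonempty set $t$ of nodes orderable $\mathfrak n_1,\dots,\mathfrak n_r$ with $\mathfrak n_{i+1}\in\{\mathtt{NE}(\mathfrak n_i),\mathtt{SE}(\mathfrak n_i)\}$; start = leftmost node, end = rightmost node; $\operatorname{ht}(t)$ = maximal height of its nodes; Dyck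 tile if start and end have height $\operatorname{ht}(t)$. The depth of $\mathfrak n\in t$ is $\operatorname{ht}(t)-\operatorname{ht}(\mathfrak n)$. A Dyck tiling of $\lambda\setminus\mu$ is a partition of it into Dyck tiles. It is cover-expansive if whenever $\mathfrak a,\mathtt{SE}(\mathfrak a)\in\lambda\setminus\mu$, the tile of $\mathtt{SE}(\mathfrak a)$ starts weakly left of the start of the tile of $\mathfrak a$, and whenever $\mathfrak a,\mathtt{SW}(\mathfrak a)\in\lambda\setminus\mu$, the tile of $\mathtt{SW}(\mathfrak a)$ ends weakly right of the end of the tile of $\mathfrak a$. *)

theory Defs
  imports Main
begin

text \<open>Nodes are pairs (a,b) of integers; genuine nodes of Young diagrams have a,b \<ge> 1
  (the paper's \<nat> = {1,2,...}).  Integers are used so that SE/SW never underflow.\<close>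

type_synonym node = "int \<times> int"

definition young :: "nat list \<Rightarrow> node set" where
  "young ls = {(a,b). 1 \<le> a \<and> a \<le> int (length ls) \<and> 1 \<le> b \<and> b \<le> int (ls ! nat (a - 1))}"

definition is_partition :: "node set \<Rightarrow> bool" where
  "is_partition D \<longleftrightarrow> (\<exists>ls. sorted_wrt (\<ge>) ls \<and> D = young ls)"

definition ht :: "node \<Rightarrow> int" where
  "ht n = fst n + snd n"

definition col :: "node \<Rightarrow> int" where
  "col n = snd n - fst n"

definition addable :: "node set \<Rightarrow> node \<Rightarrow> bool" where
  "addable D n \<longleftrightarrow> n \<notin> D \<and> is_partition (insert n D)"

definition NE :: "node \<Rightarrow> node" where "NE n = (fst n, snd n + 1)"
definition SW :: "node \<Rightarrow> node" where "SW n = (fst n, snd n - 1)"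
definition SE :: "node \<Rightarrow> node" where "SE n = (fst n - 1, snd n)"

definition is_tile :: "node set \<Rightarrow> bool" where
  "is_tile t \<longleftrightarrow> (\<exists>ns. ns \<noteq> [] \<and> t = set ns \<and>
     (\<forall>i. Suc i < length ns \<longrightarrow> ns ! Suc i \<in> {NE (ns ! i), SE (ns ! i)}))"

definition tile_start :: "node set \<Rightarrow> node" where
  "tile_start t = (THE n. n \<in> t \<and> (\<forall>m\<in>t. col n \<le> col m))"

definition tile_end :: "node set \<Rightarrow> node" where
  "tile_end t = (THE n. n \<in> t \<and> (\<forall>m\<in>t. col m \<le> col n))"

definition tile_ht :: "node set \<Rightarrow> int" where
  "tile_ht t = Max (ht ` t)"

definition is_dyck_tile :: "node set \<Rightarrow> bool" where
  "is_dyck_tile t \<longleftrightarrow> is_tile t \<and> ht (tile_start t) = tile_ht t \<and> ht (tile_end t) = tile_ht t"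

definition depth :: "node set \<Rightarrow> node \<Rightarrow> int" where
  "depth t n = tile_ht t - ht n"

definition dyck_tiling :: "node set set \<Rightarrow> node set \<Rightarrow> bool" where
  "dyck_tiling T S \<longleftrightarrow> (\<forall>t\<in>T. is_dyck_tile t) \<and> \<Union>T = S \<and>
     (\<forall>t\<in>T. \<forall>u\<in>T. t \<noteq> u \<longrightarrow> t \<inter> u = {})"

definition tile_of :: "node set set \<Rightarrow> node \<Rightarrow> node set" where
  "tile_of T n = (THE t. t \<in> T \<and> n \<in> t)"

definition cover_expansive :: "node set set \<Rightarrow> node set \<Rightarrow> bool" where
  "cover_expansive T S \<longleftrightarrow>
     (\<forall>a. a \<in> S \<and> SE a \<in> S \<longrightarrow> col (tile_start (tile_of T (SE a))) \<le> col (tile_start (tile_of T a))) \<and>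
     (\<forall>a. a \<in> S \<and> SW a \<in> S \<longrightarrow> col (tile_end (tile_of T a)) \<le> col (tile_end (tile_of T (SW a))))"

definition ce_dyck_tiling :: "node set set \<Rightarrow> node set \<Rightarrow> bool" where
  "ce_dyck_tiling T S \<longleftrightarrow> dyck_tiling T S \<and> cover_expansive T S"

end

theory Submission
  imports Defs
begin

text \<open>
  Read a skew shape column by column: with boundary functions \<open>A\<close> and \<open>B\<close> of the inner and
  outer partition, column \<open>c\<close> consists of the cells at levels \<open>0 \<le> i < B c - A c\<close>, and the
  cell at level \<open>i\<close> has height \<open>2 A c + c + 2 i\<close>. Cover-expansiveness forces every tile to stay
  at one level and to be a maximal run of consecutive columns of length greater than that level.
  Hence a cover-expansive Dyck tiling exists iff all these runs are Dyck paths, i.e. the base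
  heights \<open>2 A c + c\<close> never exceed their values at the ends of a run (\<open>left_cond\<close>,
  \<open>right_cond\<close>), and then the depth of a cell is a difference of base heights.
  Adding \<open>m\<close> to \<open>\<mu>\<close> (and \<open>l\<close> to \<open>\<lambda>\<close>) changes column lengths and base heights only in
  column \<open>j\<close>. The cell \<open>a\<close> is the top cell of column \<open>j\<close>, and its run spans the columns
  \<open>s..e\<close>, so its depth is the base height at \<open>s\<close> minus the one at \<open>j\<close>; comparing the two
  conditions before and after the change gives both equivalences.
\<close>

lemma col_NE[simp]: "col (NE n) = col n + 1" by (simp add: col_def NE_def)
lemma col_SE[simp]: "col (SE n) = col n + 1" by (simp add: col_def SE_def)
lemma col_SW[simp]: "col (SW n) = col n - 1" by (simp add: col_def SW_def)

definition col_path :: "node set \<Rightarrow> bool" where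
  "col_path t \<longleftrightarrow> finite t \<and> t \<noteq> {} \<and> inj_on col t \<and>
     (\<forall>x\<in>t. \<forall>y\<in>t. \<forall>c. col x \<le> c \<and> c \<le> col y \<longrightarrow> (\<exists>z\<in>t. col z = c)) \<and>
     (\<forall>x\<in>t. \<forall>y\<in>t. col y = col x + 1 \<longrightarrow> y = NE x \<or> y = SE x)"

lemma tile_list_col:
  assumes "\<forall>i. Suc i < length ns \<longrightarrow> ns ! Suc i \<in> {NE (ns ! i), SE (ns ! i)}"
  shows "i < length ns \<Longrightarrow> col (ns ! i) = col (ns ! 0) + int i"
proof (induction i)
  case 0 then show ?case by simp
next
  case (Suc i)
  then have "ns ! Suc i \<in> {NE (ns ! i), SE (ns ! i)}" using assms by blast
  then have "col (ns ! Suc i) = col (ns ! i) + 1" by auto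
  with Suc show ?case by simp
qed

lemma is_tile_col_path: assumes "is_tile t" shows "col_path t"
proof -
  obtain ns where ne: "ns \<noteq> []" and t: "t = set ns"
    and st: "\<forall>i. Suc i < length ns \<longrightarrow> ns ! Suc i \<in> {NE (ns ! i), SE (ns ! i)}"
    using assms unfolding is_tile_def by blast
  have cn: "\<And>i. i < length ns \<Longrightarrow> col (ns ! i) = col (ns ! 0) + int i"
    using tile_list_col[OF st] by blast
  have inj: "inj_on col t"
  proof (rule inj_onI)
    fix x y assume "x \<in> t" "y \<in> t" "col x = col y"
    then obtain i k where "i < length ns" "x = ns ! i" "k < length ns" "y = ns ! k"
      using t by (auto simp: in_set_conv_nth)
    then show "x = y" using cn \<open>col x = col y\<close> by force
  qed
  have contig: "\<forall>x\<in>t. \<forall>y\<in>t. \<forall>c. col x \<le> c \<and> c \<le> col y \<longrightarrow> (\<exists>z\<in>t. col z = c)"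
  proof (intro ballI allI impI)
    fix x y c assume "x \<in> t" "y \<in> t" and c: "col x \<le> c \<and> c \<le> col y"
    then obtain i k where i: "i < length ns" "x = ns ! i" and k: "k < length ns" "y = ns ! k"
      using t by (auto simp: in_set_conv_nth)
    define m where "m = nat (c - col (ns ! 0))"
    have "int m = c - col (ns ! 0)" using c cn i unfolding m_def by auto
    moreover have "m < length ns" using c cn i k unfolding m_def by auto
    ultimately show "\<exists>z\<in>t. col z = c" using cn t by (intro bexI[of _ "ns ! m"]) auto
  qed
  have adj: "\<forall>x\<in>t. \<forall>y\<in>t. col y = col x + 1 \<longrightarrow> y = NE x \<or> y = SE x"
  proof (intro ballI impI)
    fix x y assume "x \<in> t" "y \<in> t" and c: "col y = col x + 1"
    then obtain i k where i: "i < length ns" "x = ns ! i" and k: "k < length ns" "y = ns ! k"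
      using t by (auto simp: in_set_conv_nth)
    then have "k = Suc i" using cn c by force
    then show "y = NE x \<or> y = SE x" using st i k by auto
  qed
  show ?thesis unfolding col_path_def using inj contig adj ne t by auto
qed

lemma col_path_is_tile: assumes "col_path t" shows "is_tile t"
proof -
  have fin: "finite t" and ne: "t \<noteq> {}" and inj: "inj_on col t"
    and contig: "\<And>x y c. x\<in>t \<Longrightarrow> y\<in>t \<Longrightarrow> col x \<le> c \<Longrightarrow> c \<le> col y \<Longrightarrow> (\<exists>z\<in>t. col z = c)"
    and adj: "\<And>x y. x\<in>t \<Longrightarrow> y\<in>t \<Longrightarrow> col y = col x + 1 \<Longrightarrow> y = NE x \<or> y = SE x"
    using assms unfolding col_path_def by blast+
  define p where "p = Min (col ` t)"
  define q where "q = Max (col ` t)"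
  obtain xp where xp: "xp \<in> t" "col xp = p" using fin ne unfolding p_def
    by (metis (mono_tags, lifting) Min_in finite_imageI image_iff image_is_empty)
  obtain xq where xq: "xq \<in> t" "col xq = q" using fin ne unfolding q_def
    by (metis (mono_tags, lifting) Max_in finite_imageI image_iff image_is_empty)
  have pq: "\<And>z. z \<in> t \<Longrightarrow> p \<le> col z \<and> col z \<le> q"
    using fin unfolding p_def q_def by auto
  define g where "g k = (THE z. z \<in> t \<and> col z = p + int k)" for k
  define N where "N = nat (q - p) + 1"
  have g: "g k \<in> t \<and> col (g k) = p + int k" if "k < N" for k
  proof -
    have "p \<le> p + int k" "p + int k \<le> q" using that pq[OF xp(1)] xp unfolding N_def by auto
    then obtain z where z: "z \<in> t" "col z = p + int k"
      using contig[OF xp(1) xq(1), of "p + int k"] xp xq by auto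
    have "g k = z" unfolding g_def
    proof (rule the_equality)
      show "z \<in> t \<and> col z = p + int k" using z by simp
      fix y assume "y \<in> t \<and> col y = p + int k"
      then show "y = z" using z inj by (metis inj_onD)
    qed
    then show ?thesis using z by simp
  qed
  define ns where "ns = map g [0..<N]"
  have "ns \<noteq> []" unfolding ns_def N_def by simp
  moreover have "t = set ns"
  proof
    show "set ns \<subseteq> t" using g unfolding ns_def by auto
    show "t \<subseteq> set ns"
    proof
      fix z assume z: "z \<in> t"
      define k where "k = nat (col z - p)"
      have k: "k < N" "int k = col z - p" using pq[OF z] unfolding k_def N_def by auto
      have "g k = z" using g[OF k(1)] k z inj by (auto dest: inj_onD)
      then show "z \<in> set ns" using k unfolding ns_def by force
    qed
  qed
  moreover have "\<forall>i. Suc i < length ns \<longrightarrow> ns ! Suc i \<in> {NE (ns ! i), SE (ns ! i)}"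
  proof (intro allI impI)
    fix i assume "Suc i < length ns"
    then have i: "Suc i < N" by (simp add: ns_def)
    have "ns ! i = g i" "ns ! Suc i = g (Suc i)" using i unfolding ns_def by auto
    moreover have "g (Suc i) = NE (g i) \<or> g (Suc i) = SE (g i)"
      using adj g[OF i] g[of i] i by auto
    ultimately show "ns ! Suc i \<in> {NE (ns ! i), SE (ns ! i)}" by auto
  qed
  ultimately show ?thesis unfolding is_tile_def by blast
qed

lemma tile_start_char:
  assumes "finite t" "t \<noteq> {}" "inj_on col t"
  shows "tile_start t \<in> t \<and> (\<forall>y\<in>t. col (tile_start t) \<le> col y)"
proof -
  obtain z where z: "z \<in> t" "col z = Min (col ` t)" using assms
    by (metis (mono_tags, lifting) Min_in finite_imageI image_iff image_is_empty)
  have zm: "\<forall>y\<in>t. col z \<le> col y" using z assms by auto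
  have "tile_start t = z" unfolding tile_start_def
  proof (rule the_equality)
    show "z \<in> t \<and> (\<forall>m\<in>t. col z \<le> col m)" using z zm by auto
    fix n assume "n \<in> t \<and> (\<forall>m\<in>t. col n \<le> col m)"
    then show "n = z" using z zm assms(3) by (meson antisym inj_onD)
  qed
  then show ?thesis using z zm by simp
qed

lemma tile_end_char:
  assumes "finite t" "t \<noteq> {}" "inj_on col t"
  shows "tile_end t \<in> t \<and> (\<forall>y\<in>t. col y \<le> col (tile_end t))"
proof -
  obtain z where z: "z \<in> t" "col z = Max (col ` t)" using assms
    by (metis (mono_tags, lifting) Max_in finite_imageI image_iff image_is_empty)
  have zm: "\<forall>y\<in>t. col y \<le> col z" using z assms by auto
  have "tile_end t = z" unfolding tile_end_def
  proof (rule the_equality)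
    show "z \<in> t \<and> (\<forall>m\<in>t. col m \<le> col z)" using z zm by auto
    fix n assume "n \<in> t \<and> (\<forall>m\<in>t. col m \<le> col n)"
    then show "n = z" using z zm assms(3) by (meson antisym inj_onD)
  qed
  then show ?thesis using z zm by simp
qed

lemma tile_of_eq:
  assumes "dyck_tiling T S" "t \<in> T" "x \<in> t" shows "tile_of T x = t"
  unfolding tile_of_def
  by (rule the_equality) (use assms in \<open>auto simp: dyck_tiling_def\<close>)

lemma tile_of_in:
  assumes "dyck_tiling T S" "x \<in> S" shows "tile_of T x \<in> T \<and> x \<in> tile_of T x"
proof -
  obtain t where "t \<in> T" "x \<in> t" using assms unfolding dyck_tiling_def by blast
  then show ?thesis using tile_of_eq[OF assms(1)] by simp
qed

text \<open>Column \<open>c\<close> consists of the nodes \<open>(a, a + c)\<close>; \<open>skew A B\<close> keeps those with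
  \<open>A c \<le> a < B c\<close>, and \<open>level A x\<close> is the position of \<open>x\<close> above the lower boundary.\<close>

definition skew :: "(int \<Rightarrow> int) \<Rightarrow> (int \<Rightarrow> int) \<Rightarrow> node set" where
  "skew A B = {x. A (col x) \<le> fst x \<and> fst x < B (col x)}"
definition level :: "(int \<Rightarrow> int) \<Rightarrow> node \<Rightarrow> int" where
  "level A x = fst x - A (col x)"
definition cell :: "(int \<Rightarrow> int) \<Rightarrow> int \<Rightarrow> int \<Rightarrow> node" where
  "cell A i c = (A c + i, A c + i + c)"
definition unit_descent :: "(int \<Rightarrow> int) \<Rightarrow> bool" where
  "unit_descent A \<longleftrightarrow> (\<forall>c. A (c+1) = A c \<or> A (c+1) = A c - 1)"
definition below :: "node \<Rightarrow> node" where "below x = (fst x - 1, snd x - 1)"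

lemma fst_NE[simp]: "fst (NE x) = fst x" by (simp add: NE_def)
lemma fst_SW[simp]: "fst (SW x) = fst x" by (simp add: SW_def)
lemma fst_SE[simp]: "fst (SE x) = fst x - 1" by (simp add: SE_def)
lemma fst_below[simp]: "fst (below x) = fst x - 1" by (simp add: below_def)
lemma col_cell[simp]: "col (cell A i c) = c" by (simp add: col_def cell_def)
lemma level_cell[simp]: "level A (cell A i c) = i" by (simp add: level_def cell_def col_def)
lemma cell_level[simp]: "cell A (level A x) (col x) = x" by (simp add: level_def cell_def col_def)
lemma cell_in_skew: "cell A i c \<in> skew A B \<longleftrightarrow> 0 \<le> i \<and> i < B c - A c"
  by (auto simp: skew_def cell_def col_def)
lemma ht_cell: "ht (cell A i c) = 2 * A c + c + 2 * i" by (simp add: ht_def cell_def)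
lemma col_below[simp]: "col (below x) = col x" by (simp add: col_def below_def)
lemma level_below[simp]: "level A (below x) = level A x - 1" by (simp add: level_def)
lemma NE_below: "NE (below x) = SE x" by (simp add: NE_def below_def SE_def)
lemma SW_SE: "SW (SE x) = below x" by (simp add: SW_def below_def SE_def)
lemma level_NE: "level A (NE x) = level A x + A (col x) - A (col x + 1)" by (simp add: level_def)
lemma level_SE: "level A (SE x) = level A x - 1 + A (col x) - A (col x + 1)" by (simp add: level_def)
lemma level_SW: "level A (SW x) = level A x + A (col x) - A (col x - 1)" by (simp add: level_def)
lemma in_skew: "x \<in> skew A B \<longleftrightarrow> 0 \<le> level A x \<and> level A x < B (col x) - A (col x)"
  by (auto simp: skew_def level_def)
lemma col_eq_level_eq: "col x = col y \<Longrightarrow> level A x = level A y \<Longrightarrow> x = y"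
  by (metis cell_level)
lemma NE_ne_SE: "NE x \<noteq> SE x" by (simp add: NE_def SE_def prod_eq_iff)
lemma below_neq: "below x \<noteq> x" by (simp add: below_def prod_eq_iff)
lemma SE_inj: "SE x = SE y \<Longrightarrow> x = y" by (simp add: SE_def prod_eq_iff)
lemma NE_inj: "NE x = NE y \<Longrightarrow> x = y" by (simp add: NE_def prod_eq_iff)
lemma unit_descent_nextD: "unit_descent A \<Longrightarrow> A (c+1) = A c \<or> A (c+1) = A c - 1"
  by (simp add: unit_descent_def)
lemma unit_descent_prevD: "unit_descent A \<Longrightarrow> A c = A (c - 1) \<or> A c = A (c - 1) - 1"
  using unit_descent_nextD[of A "c - 1"] by simp

lemma col_path_pred:
  assumes "col_path t" "y \<in> t" "col (tile_start t) < col y"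
  shows "\<exists>z\<in>t. col y = col z + 1 \<and> (y = NE z \<or> y = SE z)"
proof -
  have s: "tile_start t \<in> t" using tile_start_char assms(1) unfolding col_path_def by blast
  have c: "\<forall>x\<in>t. \<forall>y\<in>t. \<forall>c. col x \<le> c \<and> c \<le> col y \<longrightarrow> (\<exists>z\<in>t. col z = c)"
    using assms(1) unfolding col_path_def by blast
  have "col (tile_start t) \<le> col y - 1 \<and> col y - 1 \<le> col y" using assms(3) by simp
  then obtain z where z: "z \<in> t" "col z = col y - 1"
    using c s assms(2) by blast
  then show ?thesis using assms unfolding col_path_def by force
qed

lemma col_path_succ:
  assumes "col_path t" "x \<in> t" "col x < col (tile_end t)"
  shows "NE x \<in> t \<or> SE x \<in> t"
proof -
  have s: "tile_end t \<in> t" using tile_end_char assms(1) unfolding col_path_def by blast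
  have c: "\<forall>x\<in>t. \<forall>y\<in>t. \<forall>c. col x \<le> c \<and> c \<le> col y \<longrightarrow> (\<exists>z\<in>t. col z = c)"
    using assms(1) unfolding col_path_def by blast
  have "col x \<le> col x + 1 \<and> col x + 1 \<le> col (tile_end t)" using assms(3) by simp
  then obtain z where z: "z \<in> t" "col z = col x + 1"
    using c s assms(2) by blast
  then show ?thesis using assms unfolding col_path_def by force
qed

lemma col_path_start: "col_path t \<Longrightarrow> tile_start t \<in> t \<and> (\<forall>y\<in>t. col (tile_start t) \<le> col y)"
  using tile_start_char unfolding col_path_def by blast
lemma col_path_end: "col_path t \<Longrightarrow> tile_end t \<in> t \<and> (\<forall>y\<in>t. col y \<le> col (tile_end t))"
  using tile_end_char unfolding col_path_def by blast
lemma col_path_inj: "col_path t \<Longrightarrow> x \<in> t \<Longrightarrow> y \<in> t \<Longrightarrow> col x = col y \<Longrightarrow> x = y"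
  unfolding col_path_def by (meson inj_onD)

locale skew_ce_tiling =
  fixes A B :: "int \<Rightarrow> int" and T :: "node set set"
  assumes descent_A: "unit_descent A" and descent_B: "unit_descent B"
    and ce_tiling: "ce_dyck_tiling T (skew A B)" and A_le_B: "\<And>c. A c \<le> B c"
begin

abbreviation "S \<equiv> skew A B"

lemma tiling: "dyck_tiling T S" using ce_tiling unfolding ce_dyck_tiling_def by blast
lemma tile_col_path: "t \<in> T \<Longrightarrow> col_path t"
  using tiling is_tile_col_path unfolding dyck_tiling_def is_dyck_tile_def by blast
lemma tile_in_shape: "t \<in> T \<Longrightarrow> x \<in> t \<Longrightarrow> x \<in> S"
  using tiling unfolding dyck_tiling_def by blast
lemma tile_of_eq_tile: "t \<in> T \<Longrightarrow> x \<in> t \<Longrightarrow> tile_of T x = t"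
  using tile_of_eq[OF tiling] by blast
lemma tile_of_mem: "x \<in> S \<Longrightarrow> tile_of T x \<in> T \<and> x \<in> tile_of T x"
  using tile_of_in[OF tiling] by blast
lemma same_tile: "t \<in> T \<Longrightarrow> u \<in> T \<Longrightarrow> x \<in> t \<Longrightarrow> x \<in> u \<Longrightarrow> t = u"
  using tiling unfolding dyck_tiling_def by blast
lemma ce_start: "a \<in> S \<Longrightarrow> SE a \<in> S \<Longrightarrow> col (tile_start (tile_of T (SE a))) \<le> col (tile_start (tile_of T a))"
  using ce_tiling unfolding ce_dyck_tiling_def cover_expansive_def by blast
lemma ce_end: "a \<in> S \<Longrightarrow> SW a \<in> S \<Longrightarrow> col (tile_end (tile_of T a)) \<le> col (tile_end (tile_of T (SW a)))"
  using ce_tiling unfolding ce_dyck_tiling_def cover_expansive_def by blast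

lemma NE_descent_below:
  assumes "t \<in> T" "x \<in> t" "NE x \<in> t" "A (col x + 1) = A (col x) - 1"
  shows "\<exists>u\<in>T. below x \<in> u \<and> NE (below x) \<in> u"
proof -
  have xS: "x \<in> S" using tile_in_shape assms by blast
  have seS: "SE x \<in> S" using xS assms(4) unit_descent_nextD[OF descent_B, of "col x"]
    by (auto simp: skew_def)
  define u where "u = tile_of T (SE x)"
  have u: "u \<in> T" "SE x \<in> u" using tile_of_mem[OF seS] u_def by auto
  have "col (tile_start u) \<le> col (tile_start t)"
    using ce_start[OF xS seS] tile_of_eq_tile[OF assms(1,2)] u_def by simp
  also have "\<dots> \<le> col x" using col_path_start[OF tile_col_path[OF assms(1)]] assms(2) by blast
  finally have "col (tile_start u) < col (SE x)" by simp
  then obtain z where z: "z \<in> u" "col (SE x) = col z + 1" "SE x = NE z \<or> SE x = SE z"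
    using col_path_pred[OF tile_col_path[OF u(1)] u(2)] by blast
  show ?thesis
  proof (cases "SE x = SE z")
    case True
    then have "z = x" using SE_inj by blast
    then have "u = t" using same_tile assms u z by blast
    then have "SE x = NE x" using col_path_inj[OF tile_col_path[OF assms(1)]] u assms by simp
    then show ?thesis using NE_ne_SE by metis
  next
    case False
    then have "SE x = NE z" using z by blast
    then have "z = below x" by (metis NE_below NE_inj)
    then show ?thesis using z u NE_below by metis
  qed
qed

lemma SE_flat_below:
  assumes "t \<in> T" "x \<in> t" "SE x \<in> t" "A (col x + 1) = A (col x)"
  shows "\<exists>v\<in>T. below x \<in> v \<and> SE (below x) \<in> v"
proof -
  have xS: "x \<in> S" using tile_in_shape assms by blast
  have seS: "SE x \<in> S" using tile_in_shape assms by blast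
  have dS: "below x \<in> S" using xS seS assms(4) by (auto simp: skew_def)
  define v where "v = tile_of T (below x)"
  have v: "v \<in> T" "below x \<in> v" using tile_of_mem[OF dS] v_def by auto
  have "col (SE x) \<le> col (tile_end t)"
    using col_path_end[OF tile_col_path[OF assms(1)]] assms(3) by blast
  also have "\<dots> \<le> col (tile_end v)"
    using ce_end[OF seS] dS tile_of_eq_tile[OF assms(1,3)] v_def SW_SE by simp
  finally have "col (below x) < col (tile_end v)" by simp
  then have "NE (below x) \<in> v \<or> SE (below x) \<in> v"
    using col_path_succ[OF tile_col_path[OF v(1)] v(2)] by blast
  moreover have "NE (below x) \<notin> v"
  proof
    assume "NE (below x) \<in> v"
    then have "SE x \<in> v" using NE_below by metis
    then have "v = t" using same_tile assms v by blast
    then have "below x = x" using col_path_inj[OF tile_col_path[OF assms(1)]] v assms by simp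
    then show False using below_neq by metis
  qed
  ultimately show ?thesis using v by blast
qed

lemma no_NE_at_descent: "t \<in> T \<Longrightarrow> x \<in> t \<Longrightarrow> NE x \<in> t \<Longrightarrow> A (col x + 1) = A (col x) - 1 \<Longrightarrow> False"
proof (induction "nat (level A x)" arbitrary: x t rule: less_induct)
  case less
  obtain u where u: "u \<in> T" "below x \<in> u" "NE (below x) \<in> u"
    using NE_descent_below less.prems by blast
  have "0 \<le> level A (below x)" using tile_in_shape[OF u(1,2)] in_skew by blast
  then have "nat (level A (below x)) < nat (level A x)" by simp
  then show False using less.hyps[OF _ u] less.prems(4) by simp
qed

lemma no_SE_at_flat: "t \<in> T \<Longrightarrow> x \<in> t \<Longrightarrow> SE x \<in> t \<Longrightarrow> A (col x + 1) = A (col x) \<Longrightarrow> False"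
proof (induction "nat (level A x)" arbitrary: x t rule: less_induct)
  case less
  obtain u where u: "u \<in> T" "below x \<in> u" "SE (below x) \<in> u"
    using SE_flat_below less.prems by blast
  have "0 \<le> level A (below x)" using tile_in_shape[OF u(1,2)] in_skew by blast
  then have "nat (level A (below x)) < nat (level A x)" by simp
  then show False using less.hyps[OF _ u] less.prems(4) by simp
qed

lemma level_adjacent:
  assumes "t \<in> T" "x \<in> t" "y \<in> t" "col y = col x + 1"
  shows "level A y = level A x"
proof -
  have "y = NE x \<or> y = SE x" using tile_col_path[OF assms(1)] assms unfolding col_path_def by blast
  then show ?thesis
  proof
    assume y: "y = NE x"
    then have "A (col x + 1) = A (col x)"
      using no_NE_at_descent[OF assms(1,2)] assms(3) unit_descent_nextD[OF descent_A] by blast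
    then show ?thesis using y level_NE by simp
  next
    assume y: "y = SE x"
    then have "A (col x + 1) = A (col x) - 1"
      using no_SE_at_flat[OF assms(1,2)] assms(3) unit_descent_nextD[OF descent_A] by blast
    then show ?thesis using y level_SE by simp
  qed
qed

lemma level_const_right:
  assumes "t \<in> T" "x \<in> t" "y \<in> t" "col x \<le> col y"
  shows "level A y = level A x"
  using assms(3,4)
proof (induction "nat (col y - col x)" arbitrary: y rule: less_induct)
  case less
  show ?case
  proof (cases "col y = col x")
    case True then show ?thesis
      using col_path_inj[OF tile_col_path[OF assms(1)] assms(2) less.prems(1)] by simp
  next
    case False
    then have "col (tile_start t) < col y"
      using col_path_start[OF tile_col_path[OF assms(1)]] assms(2) less.prems by force
    then obtain z where z: "z \<in> t" "col y = col z + 1"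
      using col_path_pred[OF tile_col_path[OF assms(1)] less.prems(1)] by blast
    have "level A z = level A x" using less.hyps[of z] z less.prems False by simp
    then show ?thesis using level_adjacent[OF assms(1) z(1) less.prems(1) z(2)] by simp
  qed
qed

lemma level_const: "t \<in> T \<Longrightarrow> x \<in> t \<Longrightarrow> y \<in> t \<Longrightarrow> level A y = level A x"
  by (metis level_const_right linorder_le_cases)

lemma tile_cell_eq: "t \<in> T \<Longrightarrow> x \<in> t \<Longrightarrow> y \<in> t \<Longrightarrow> y = cell A (level A x) (col y)"
  using level_const by (metis cell_level)

lemma tile_end_maximal:
  assumes "t \<in> T" "x \<in> t" "col x = col (tile_end t)" "cell A (level A x) (col x + 1) \<in> S"
  shows False
proof -
  define y where "y = cell A (level A x) (col x + 1)"
  have xS: "x \<in> S" using tile_in_shape assms by blast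
  have yS: "y \<in> S" using assms y_def by simp
  have "y = NE x \<or> y = SE x"
    using unit_descent_nextD[OF descent_A, of "col x"] unfolding y_def
    by (auto simp: cell_def NE_def SE_def level_def col_def prod_eq_iff)
  then show False
  proof
    assume yx: "y = SE x"
    define u where "u = tile_of T y"
    have u: "u \<in> T" "y \<in> u" using tile_of_mem[OF yS] u_def by auto
    have "col (tile_start u) \<le> col (tile_start t)"
      using ce_start[OF xS] yS yx tile_of_eq_tile[OF assms(1,2)] u_def by simp
    also have "\<dots> \<le> col x" using col_path_start[OF tile_col_path[OF assms(1)]] assms(2) by blast
    finally have "col (tile_start u) < col y" using yx by simp
    then obtain z where z: "z \<in> u" "col y = col z + 1" "y = NE z \<or> y = SE z"
      using col_path_pred[OF tile_col_path[OF u(1)] u(2)] by blast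
    show False
    proof (cases "y = SE z")
      case True
      then have "z = x" using SE_inj yx by blast
      then have "u = t" using same_tile assms u z by blast
      then have "col y \<le> col (tile_end t)"
        using col_path_end[OF tile_col_path[OF assms(1)]] u by blast
      then show False using assms(3) y_def by simp
    next
      case False
      then have "z = below x" using z yx by (metis NE_below NE_inj)
      then have "level A z = level A y" using level_const[OF u(1) u(2) z(1)] by simp
      then show False using \<open>z = below x\<close> y_def by simp
    qed
  next
    assume yx: "y = NE x"
    have "SW y = x" using yx by (simp add: SW_def NE_def)
    define u where "u = tile_of T y"
    have u: "u \<in> T" "y \<in> u" using tile_of_mem[OF yS] u_def by auto
    have "col (tile_end u) \<le> col (tile_end t)"
      using ce_end[OF yS] xS \<open>SW y = x\<close> tile_of_eq_tile[OF assms(1,2)] u_def by simp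
    moreover have "col y \<le> col (tile_end u)" using col_path_end[OF tile_col_path[OF u(1)]] u by blast
    ultimately show False using assms(3) y_def by simp
  qed
qed

lemma tile_start_maximal:
  assumes "t \<in> T" "x \<in> t" "col x = col (tile_start t)" "cell A (level A x) (col x - 1) \<in> S"
  shows False
proof -
  define z where "z = cell A (level A x) (col x - 1)"
  have xS: "x \<in> S" using tile_in_shape assms by blast
  have zS: "z \<in> S" using assms z_def by simp
  have "z = SW x \<or> SE z = x"
    using unit_descent_prevD[OF descent_A, of "col x"] unfolding z_def
    by (auto simp: cell_def SW_def SE_def level_def col_def prod_eq_iff)
  then show False
  proof
    assume zx: "z = SW x"
    define v where "v = tile_of T z"
    have v: "v \<in> T" "z \<in> v" using tile_of_mem[OF zS] v_def by auto
    have "col (tile_end t) \<le> col (tile_end v)"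
      using ce_end[OF xS] zS zx tile_of_eq_tile[OF assms(1,2)] v_def by simp
    moreover have "col x \<le> col (tile_end t)"
      using col_path_end[OF tile_col_path[OF assms(1)]] assms(2) by blast
    ultimately have "col z < col (tile_end v)" using z_def by simp
    then have "NE z \<in> v \<or> SE z \<in> v"
      using col_path_succ[OF tile_col_path[OF v(1)] v(2)] by blast
    then show False
    proof
      assume "NE z \<in> v"
      then have "x \<in> v" using zx by (simp add: NE_def SW_def)
      then have "v = t" using same_tile assms v by blast
      then have "col (tile_start t) \<le> col z"
        using col_path_start[OF tile_col_path[OF assms(1)]] v by blast
      then show False using assms(3) z_def by simp
    next
      assume "SE z \<in> v"
      have "SE z = below x" using zx by (simp add: SE_def SW_def below_def)
      have "level A (SE z) = level A z" using level_const[OF v(1) v(2) \<open>SE z \<in> v\<close>] .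
      then have "level A (below x) = level A z" using \<open>SE z = below x\<close> by simp
      then show False using z_def by simp
    qed
  next
    assume zx: "SE z = x"
    have "col (tile_start (tile_of T x)) \<le> col (tile_start (tile_of T z))"
      using ce_start[OF zS] xS zx by simp
    also have "\<dots> \<le> col z" using col_path_start[OF tile_col_path] tile_of_mem[OF zS] by blast
    finally show False using tile_of_eq_tile[OF assms(1,2)] assms(3) z_def by simp
  qed
qed

end

definition col_len :: "(int \<Rightarrow> int) \<Rightarrow> (int \<Rightarrow> int) \<Rightarrow> int \<Rightarrow> int" where
  "col_len A B c = B c - A c"
definition base_ht :: "(int \<Rightarrow> int) \<Rightarrow> int \<Rightarrow> int" where
  "base_ht A c = 2 * A c + c"

definition left_cond :: "(int \<Rightarrow> int) \<Rightarrow> (int \<Rightarrow> int) \<Rightarrow> bool" where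
  "left_cond n f \<longleftrightarrow> (\<forall>p c. p \<le> c \<and> (\<forall>c'. p \<le> c' \<and> c' \<le> c \<longrightarrow> n (p - 1) < n c') \<longrightarrow> f c \<le> f p)"
definition right_cond :: "(int \<Rightarrow> int) \<Rightarrow> (int \<Rightarrow> int) \<Rightarrow> bool" where
  "right_cond n f \<longleftrightarrow> (\<forall>c q. c \<le> q \<and> (\<forall>c'. c \<le> c' \<and> c' \<le> q \<longrightarrow> n (q + 1) < n c') \<longrightarrow> f c \<le> f q)"

lemma left_condD: "left_cond n f \<Longrightarrow> p \<le> c \<Longrightarrow> (\<And>c'. p \<le> c' \<Longrightarrow> c' \<le> c \<Longrightarrow> n (p - 1) < n c') \<Longrightarrow> f c \<le> f p"
  unfolding left_cond_def by blast
lemma right_condD: "right_cond n f \<Longrightarrow> c \<le> q \<Longrightarrow> (\<And>c'. c \<le> c' \<Longrightarrow> c' \<le> q \<Longrightarrow> n (q + 1) < n c') \<Longrightarrow> f c \<le> f q"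
  unfolding right_cond_def by blast

lemma cell_in_skew_iff: "cell A i c \<in> skew A B \<longleftrightarrow> 0 \<le> i \<and> i < col_len A B c"
  by (simp add: cell_in_skew col_len_def)
lemma ht_cell_base: "ht (cell A i c) = base_ht A c + 2 * i" by (simp add: ht_cell base_ht_def)

context skew_ce_tiling begin

lemma tile_contains_cell:
  assumes "t \<in> T" "x \<in> t" "col (tile_start t) \<le> c" "c \<le> col (tile_end t)"
  shows "cell A (level A x) c \<in> t"
proof -
  have tt: "col_path t" using tile_col_path assms by blast
  have "\<exists>z\<in>t. col z = c"
    using tt col_path_start[OF tt] col_path_end[OF tt] assms unfolding col_path_def by blast
  then obtain z where "z \<in> t" "col z = c" by blast
  then show ?thesis using tile_cell_eq[OF assms(1,2)] by metis
qed

lemma dyck_tile_ht: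
  assumes "t \<in> T" "y \<in> t"
  shows "ht y \<le> ht (tile_start t) \<and> ht y \<le> ht (tile_end t) \<and> tile_ht t = ht (tile_start t)"
proof -
  have d: "is_dyck_tile t" using tiling assms unfolding dyck_tiling_def by blast
  have "finite t" using tile_col_path[OF assms(1)] unfolding col_path_def by blast
  then have "ht y \<le> tile_ht t" unfolding tile_ht_def using assms(2) by simp
  then show ?thesis using d unfolding is_dyck_tile_def by simp
qed

lemma left_cond_holds: "left_cond (col_len A B) (base_ht A)"
  unfolding left_cond_def
proof (intro allI impI)
  fix p c assume a: "p \<le> c \<and> (\<forall>c'. p \<le> c' \<and> c' \<le> c \<longrightarrow> col_len A B (p - 1) < col_len A B c')"
  define i where "i = col_len A B (p - 1)"
  have i0: "0 \<le> i" using A_le_B unfolding i_def col_len_def by (simp add: algebra_simps)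
  define y where "y = cell A i p"
  have yS: "y \<in> S" using a i0 unfolding y_def i_def cell_in_skew_iff by auto
  define t where "t = tile_of T y"
  have t: "t \<in> T" "y \<in> t" using tile_of_mem[OF yS] t_def by auto
  have ly: "level A y = i" using y_def by simp
  have tt: "col_path t" using tile_col_path[OF t(1)] .
  have sp: "col (tile_start t) \<le> p" "p \<le> col (tile_end t)"
    using col_path_start[OF tt] col_path_end[OF tt] t y_def by auto
  have s: "col (tile_start t) = p"
  proof (rule ccontr)
    assume "col (tile_start t) \<noteq> p"
    then have "cell A i (p - 1) \<in> t" using tile_contains_cell[OF t, of "p - 1"] sp ly by simp
    then have "cell A i (p - 1) \<in> S" using tile_in_shape t by blast
    then show False using i_def cell_in_skew_iff by simp
  qed
  have e: "c \<le> col (tile_end t)"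
  proof (rule ccontr)
    assume ne: "\<not> c \<le> col (tile_end t)"
    define w where "w = tile_end t"
    have w: "w \<in> t" using col_path_end[OF tt] w_def by blast
    have lw: "level A w = i" using level_const[OF t(1) t(2) w] ly by simp
    have "cell A i (col w + 1) \<in> S" using a ne sp i0 unfolding w_def i_def cell_in_skew_iff by auto
    then show False using tile_end_maximal[OF t(1) w] lw w_def by simp
  qed
  have "cell A i c \<in> t" using tile_contains_cell[OF t, of c] ly s e a by simp
  then have "ht (cell A i c) \<le> ht (tile_start t)" using dyck_tile_ht t by blast
  moreover have "tile_start t = cell A i p"
    using tile_cell_eq[OF t(1) t(2)] col_path_start[OF tt] s ly by metis
  ultimately show "base_ht A c \<le> base_ht A p" by (simp add: ht_cell_base)
qed

lemma right_cond_holds: "right_cond (col_len A B) (base_ht A)"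
  unfolding right_cond_def
proof (intro allI impI)
  fix c q assume a: "c \<le> q \<and> (\<forall>c'. c \<le> c' \<and> c' \<le> q \<longrightarrow> col_len A B (q + 1) < col_len A B c')"
  define i where "i = col_len A B (q + 1)"
  have i0: "0 \<le> i" using A_le_B unfolding i_def col_len_def by (simp add: algebra_simps)
  define y where "y = cell A i q"
  have yS: "y \<in> S" using a i0 unfolding y_def i_def cell_in_skew_iff by auto
  define t where "t = tile_of T y"
  have t: "t \<in> T" "y \<in> t" using tile_of_mem[OF yS] t_def by auto
  have ly: "level A y = i" using y_def by simp
  have tt: "col_path t" using tile_col_path[OF t(1)] .
  have sp: "col (tile_start t) \<le> q" "q \<le> col (tile_end t)"
    using col_path_start[OF tt] col_path_end[OF tt] t y_def by auto
  have e: "col (tile_end t) = q"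
  proof (rule ccontr)
    assume "col (tile_end t) \<noteq> q"
    then have "cell A i (q + 1) \<in> t" using tile_contains_cell[OF t, of "q + 1"] sp ly by simp
    then have "cell A i (q + 1) \<in> S" using tile_in_shape t by blast
    then show False using i_def cell_in_skew_iff by simp
  qed
  have s: "col (tile_start t) \<le> c"
  proof (rule ccontr)
    assume ne: "\<not> col (tile_start t) \<le> c"
    define w where "w = tile_start t"
    have w: "w \<in> t" using col_path_start[OF tt] w_def by blast
    have lw: "level A w = i" using level_const[OF t(1) t(2) w] ly by simp
    have "cell A i (col w - 1) \<in> S" using a ne sp i0 unfolding w_def i_def cell_in_skew_iff by auto
    then show False using tile_start_maximal[OF t(1) w] lw w_def by simp
  qed
  have "cell A i c \<in> t" using tile_contains_cell[OF t, of c] ly s e a by simp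
  then have "ht (cell A i c) \<le> ht (tile_end t)" using dyck_tile_ht t by blast
  moreover have "tile_end t = cell A i q"
    using tile_cell_eq[OF t(1) t(2)] col_path_end[OF tt] e ly by metis
  ultimately show "base_ht A c \<le> base_ht A q" by (simp add: ht_cell_base)
qed

lemma depth_formula:
  assumes "t \<in> T" "x \<in> t" "s \<le> col x" "col_len A B (s - 1) \<le> level A x"
    "\<forall>c'. s \<le> c' \<and> c' \<le> col x \<longrightarrow> level A x < col_len A B c'"
  shows "depth t x = base_ht A s - base_ht A (col x)"
proof -
  define i where "i = level A x"
  have tt: "col_path t" using tile_col_path[OF assms(1)] .
  have i0: "0 \<le> i" using tile_in_shape[OF assms(1,2)] in_skew i_def by blast
  have sx: "col (tile_start t) \<le> col x" "col x \<le> col (tile_end t)"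
    using col_path_start[OF tt] col_path_end[OF tt] assms(2) by auto
  have s: "col (tile_start t) = s"
  proof (rule ccontr)
    assume ne: "col (tile_start t) \<noteq> s"
    show False
    proof (cases "col (tile_start t) < s")
      case True
      then have "cell A i (s - 1) \<in> t"
        using tile_contains_cell[OF assms(1,2), of "s - 1"] sx assms(3) i_def by simp
      then have "cell A i (s - 1) \<in> S" using tile_in_shape assms by blast
      then show False using assms(4) i_def cell_in_skew_iff by simp
    next
      case False
      define w where "w = tile_start t"
      have w: "w \<in> t" using col_path_start[OF tt] w_def by blast
      have lw: "level A w = i" using level_const[OF assms(1,2) w] i_def by simp
      have "cell A i (col w - 1) \<in> S"
        using assms(5) False ne sx i0 unfolding w_def i_def cell_in_skew_iff
        by auto
      then show False using tile_start_maximal[OF assms(1) w] lw w_def by simp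
    qed
  qed
  have "tile_start t = cell A i s"
    using tile_cell_eq[OF assms(1,2)] col_path_start[OF tt] s i_def by metis
  then have "tile_ht t = base_ht A s + 2 * i" using dyck_tile_ht[OF assms(1,2)] ht_cell_base by simp
  moreover have "ht x = base_ht A (col x) + 2 * i" using ht_cell_base[of A i "col x"] i_def by simp
  ultimately show ?thesis unfolding depth_def by simp
qed

end

definition between :: "int \<Rightarrow> int \<Rightarrow> int \<Rightarrow> bool" where
  "between a b c \<longleftrightarrow> (a \<le> c \<and> c \<le> b) \<or> (b \<le> c \<and> c \<le> a)"

lemma between_split: "between a b c \<Longrightarrow> between a m c \<or> between m b c"
  by (auto simp: between_def)
lemma between_sym: "between a b c \<longleftrightarrow> between b a c" by (auto simp: between_def)
lemma between_mid: "b \<le> c \<Longrightarrow> c \<le> d \<Longrightarrow> between a c c' \<Longrightarrow> between a b c' \<or> between a d c'"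
  by (auto simp: between_def)

definition run :: "(int \<Rightarrow> int) \<Rightarrow> (int \<Rightarrow> int) \<Rightarrow> node \<Rightarrow> node set" where
  "run A B x = {y \<in> skew A B. level A y = level A x \<and> (\<forall>c. between (col x) (col y) c \<longrightarrow> level A x < col_len A B c)}"

locale skew_conds =
  fixes A B :: "int \<Rightarrow> int"
  assumes descent_A: "unit_descent A" and descent_B: "unit_descent B" and A_le_B: "\<And>c. A c \<le> B c"
    and finite_skew: "finite (skew A B)" and left: "left_cond (col_len A B) (base_ht A)" and right: "right_cond (col_len A B) (base_ht A)"
begin

abbreviation "S \<equiv> skew A B"

lemma run_self: "x \<in> S \<Longrightarrow> x \<in> run A B x"
  unfolding run_def by (auto simp: between_def in_skew col_len_def)

lemma run_memD: "y \<in> run A B x \<Longrightarrow> y \<in> S \<and> level A y = level A x \<and> (\<forall>c. between (col x) (col y) c \<longrightarrow> level A x < col_len A B c)"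
  unfolding run_def by blast

lemma run_eq:
  assumes "z \<in> run A B x" shows "run A B z = run A B x"
proof -
  have z: "level A z = level A x" "\<forall>c. between (col x) (col z) c \<longrightarrow> level A x < col_len A B c"
    using run_memD[OF assms] by auto
  show ?thesis
  proof (intro set_eqI iffI)
    fix w assume "w \<in> run A B z"
    then have w: "w \<in> S" "level A w = level A z" "\<forall>c. between (col z) (col w) c \<longrightarrow> level A z < col_len A B c"
      using run_memD by auto
    have "\<forall>c. between (col x) (col w) c \<longrightarrow> level A x < col_len A B c"
      using z w between_split[of "col x" "col w" _ "col z"] by auto
    then show "w \<in> run A B x" using w z unfolding run_def by auto
  next
    fix w assume "w \<in> run A B x"
    then have w: "w \<in> S" "level A w = level A x" "\<forall>c. between (col x) (col w) c \<longrightarrow> level A x < col_len A B c"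
      using run_memD by auto
    have "\<forall>c. between (col z) (col w) c \<longrightarrow> level A z < col_len A B c"
      using z w between_split[of "col z" "col w" _ "col x"] between_sym by metis
    then show "w \<in> run A B z" using w z unfolding run_def by auto
  qed
qed

lemma run_col_path:
  assumes xS: "x \<in> S" shows "col_path (run A B x)"
proof -
  let ?t = "run A B x"
  have i0: "0 \<le> level A x" using xS in_skew by blast
  have "finite ?t" using finite_skew unfolding run_def by (rule rev_finite_subset) auto
  moreover have "?t \<noteq> {}" using run_self[OF xS] by blast
  moreover have "inj_on col ?t"
    by (rule inj_onI) (metis run_memD col_eq_level_eq)
  moreover have "\<forall>y\<in>?t. \<forall>z\<in>?t. \<forall>c. col y \<le> c \<and> c \<le> col z \<longrightarrow> (\<exists>w\<in>?t. col w = c)"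
  proof (intro ballI allI impI)
    fix y z c assume y: "y \<in> ?t" and z: "z \<in> ?t" and c: "col y \<le> c \<and> c \<le> col z"
    define w where "w = cell A (level A x) c"
    have hy: "\<forall>c. between (col x) (col y) c \<longrightarrow> level A x < col_len A B c"
      using run_memD[OF y] by blast
    have hz: "\<forall>c. between (col x) (col z) c \<longrightarrow> level A x < col_len A B c"
      using run_memD[OF z] by blast
    have hc: "\<forall>c'. between (col x) c c' \<longrightarrow> level A x < col_len A B c'"
      using between_mid[of "col y" c "col z" "col x"] c hy hz by blast
    have "level A x < col_len A B c" using hc between_def by auto
    then have "w \<in> S" using i0 unfolding w_def cell_in_skew_iff by simp
    then have "w \<in> ?t" using hc unfolding run_def w_def by simp
    then show "\<exists>w\<in>?t. col w = c" unfolding w_def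
      by (intro bexI[of _ "cell A (level A x) c"]) auto
  qed
  moreover have "\<forall>y\<in>?t. \<forall>z\<in>?t. col z = col y + 1 \<longrightarrow> z = NE y \<or> z = SE y"
  proof (intro ballI impI)
    fix y z assume y: "y \<in> ?t" and z: "z \<in> ?t" and c: "col z = col y + 1"
    have "level A z = level A y" using run_memD y z by simp
    then have "z = cell A (level A y) (col y + 1)" using c by (metis cell_level)
    then show "z = NE y \<or> z = SE y"
      using unit_descent_nextD[OF descent_A, of "col y"]
      by (auto simp: cell_def NE_def SE_def level_def col_def prod_eq_iff)
  qed
  ultimately show ?thesis unfolding col_path_def by blast
qed

lemma run_start:
  assumes xS: "x \<in> S"
  shows "tile_start (run A B x) \<in> run A B x \<and> col (tile_start (run A B x)) \<le> col x
     \<and> col_len A B (col (tile_start (run A B x)) - 1) \<le> level A x"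
proof -
  let ?t = "run A B x" let ?s = "tile_start ?t"
  have st: "?s \<in> ?t" "\<forall>y\<in>?t. col ?s \<le> col y"
    using col_path_start[OF run_col_path[OF xS]] by auto
  have sx: "col ?s \<le> col x" using st run_self[OF xS] by blast
  have i0: "0 \<le> level A x" using xS in_skew by blast
  have hs: "\<forall>c. between (col x) (col ?s) c \<longrightarrow> level A x < col_len A B c"
    using run_memD[OF st(1)] by blast
  have "col_len A B (col ?s - 1) \<le> level A x"
  proof (rule ccontr)
    assume "\<not> ?thesis"
    then have lt: "level A x < col_len A B (col ?s - 1)" by simp
    define w where "w = cell A (level A x) (col ?s - 1)"
    have "w \<in> S" using lt i0 unfolding w_def cell_in_skew_iff by simp
    moreover have "\<forall>c. between (col x) (col w) c \<longrightarrow> level A x < col_len A B c"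
    proof (intro allI impI)
      fix c assume "between (col x) (col w) c"
      then have "c = col ?s - 1 \<or> between (col x) (col ?s) c"
        using sx unfolding w_def between_def by auto
      then show "level A x < col_len A B c" using lt hs by auto
    qed
    ultimately have "w \<in> ?t" unfolding run_def w_def by simp
    then show False using st(2) unfolding w_def by fastforce
  qed
  then show ?thesis using st sx by blast
qed

lemma run_end:
  assumes xS: "x \<in> S"
  shows "tile_end (run A B x) \<in> run A B x \<and> col x \<le> col (tile_end (run A B x))
     \<and> col_len A B (col (tile_end (run A B x)) + 1) \<le> level A x"
proof -
  let ?t = "run A B x" let ?s = "tile_end ?t"
  have st: "?s \<in> ?t" "\<forall>y\<in>?t. col y \<le> col ?s"
    using col_path_end[OF run_col_path[OF xS]] by auto
  have sx: "col x \<le> col ?s" using st run_self[OF xS] by blast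
  have i0: "0 \<le> level A x" using xS in_skew by blast
  have hs: "\<forall>c. between (col x) (col ?s) c \<longrightarrow> level A x < col_len A B c"
    using run_memD[OF st(1)] by blast
  have "col_len A B (col ?s + 1) \<le> level A x"
  proof (rule ccontr)
    assume "\<not> ?thesis"
    then have lt: "level A x < col_len A B (col ?s + 1)" by simp
    define w where "w = cell A (level A x) (col ?s + 1)"
    have "w \<in> S" using lt i0 unfolding w_def cell_in_skew_iff by simp
    moreover have "\<forall>c. between (col x) (col w) c \<longrightarrow> level A x < col_len A B c"
    proof (intro allI impI)
      fix c assume "between (col x) (col w) c"
      then have "c = col ?s + 1 \<or> between (col x) (col ?s) c"
        using sx unfolding w_def between_def by auto
      then show "level A x < col_len A B c" using lt hs by auto
    qed
    ultimately have "w \<in> ?t" unfolding run_def w_def by simp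
    then show False using st(2) unfolding w_def by fastforce
  qed
  then show ?thesis using st sx by blast
qed

lemma run_dyck:
  assumes xS: "x \<in> S" shows "is_dyck_tile (run A B x)"
proof -
  let ?t = "run A B x" let ?s = "tile_start ?t" let ?e = "tile_end ?t"
  define i where "i = level A x"
  have tt: "col_path ?t" using run_col_path[OF xS] .
  have s: "?s \<in> ?t" "col ?s \<le> col x" "col_len A B (col ?s - 1) \<le> i"
    using run_start[OF xS] i_def by auto
  have e: "?e \<in> ?t" "col x \<le> col ?e" "col_len A B (col ?e + 1) \<le> i"
    using run_end[OF xS] i_def by auto
  have ls: "level A ?s = i" "level A ?e = i" using run_memD s e i_def by auto
  have hs: "\<forall>c. between (col x) (col ?s) c \<longrightarrow> i < col_len A B c"
    using run_memD[OF s(1)] i_def by blast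
  have he: "\<forall>c. between (col x) (col ?e) c \<longrightarrow> i < col_len A B c"
    using run_memD[OF e(1)] i_def by blast
  have bnd: "ht y \<le> ht ?s \<and> ht y \<le> ht ?e" if y: "y \<in> ?t" for y
  proof -
    have ly: "level A y = i" "\<forall>c. between (col x) (col y) c \<longrightarrow> i < col_len A B c"
      using run_memD[OF y] i_def by auto
    have ys: "col ?s \<le> col y" "col y \<le> col ?e"
      using col_path_start[OF tt] col_path_end[OF tt] y by auto
    have all: "i < col_len A B c" if "col ?s \<le> c" "c \<le> col ?e" for c
      using that hs he s(2) e(2) unfolding between_def by (cases "c \<le> col x") auto
    have "base_ht A (col y) \<le> base_ht A (col ?s)"
      using left ys s(3) all unfolding left_cond_def
      by (meson dual_order.trans order_le_less_trans)
    moreover have "base_ht A (col y) \<le> base_ht A (col ?e)"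
      using right ys e(3) all unfolding right_cond_def
      by (meson dual_order.trans order_le_less_trans)
    moreover have "ht y = base_ht A (col y) + 2 * i" "ht ?s = base_ht A (col ?s) + 2 * i" "ht ?e = base_ht A (col ?e) + 2 * i"
      using ht_cell_base[of A "level A z" "col z" for z] ly ls by (metis cell_level)+
    ultimately show ?thesis by simp
  qed
  have fin_t: "finite ?t" using tt unfolding col_path_def by blast
  have "tile_ht ?t = ht ?s" unfolding tile_ht_def
    by (rule Max_eqI) (use fin_t bnd s in auto)
  moreover have "ht ?e = ht ?s" using bnd s(1) e(1) by (simp add: eq_iff)
  ultimately show ?thesis unfolding is_dyck_tile_def using col_path_is_tile[OF tt] by simp
qed

definition runs :: "node set set" where
  "runs = run A B ` S"

lemma dyck_tiling_runs: "dyck_tiling runs S"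
  unfolding dyck_tiling_def runs_def
proof (intro conjI)
  show "\<forall>t\<in>run A B ` S. is_dyck_tile t" using run_dyck by blast
  show "\<Union> (run A B ` S) = S" using run_self run_memD by blast
  show "\<forall>t\<in>run A B ` S. \<forall>u\<in>run A B ` S. t \<noteq> u \<longrightarrow> t \<inter> u = {}"
    using run_eq by blast
qed

lemma tile_of_runs: "x \<in> S \<Longrightarrow> tile_of runs x = run A B x"
  using tile_of_eq[OF dyck_tiling_runs] run_self unfolding runs_def by blast

lemma run_start_SE:
  assumes a: "x \<in> S" "SE x \<in> S"
  shows "col (tile_start (run A B (SE x))) \<le> col (tile_start (run A B x))"
proof -
  let ?s = "tile_start (run A B x)"
  have s: "?s \<in> run A B x" "col ?s \<le> col x" using run_start a by auto
  have hs: "\<forall>c. between (col x) (col ?s) c \<longrightarrow> level A x < col_len A B c" "level A ?s = level A x"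
    using run_memD[OF s(1)] by auto
  define i' where "i' = level A (SE x)"
  have i': "0 \<le> i'" "i' \<le> level A x" "i' < col_len A B (col x + 1)"
    using a unit_descent_nextD[OF descent_A, of "col x"] in_skew[of "SE x" A B]
    unfolding i'_def level_SE col_len_def
    by auto
  define w where "w = cell A i' (col ?s)"
  have "w \<in> run A B (SE x)"
  proof -
    have "cell A i' (col ?s) \<in> S"
      using i' hs s unfolding cell_in_skew_iff by (auto simp: between_def)
    moreover have "level A (cell A i' (col ?s)) = level A (SE x)" using i'_def by simp
    moreover have "\<forall>c. between (col (SE x)) (col (cell A i' (col ?s))) c \<longrightarrow> level A (SE x) < col_len A B c"
    proof (intro allI impI)
      fix c assume "between (col (SE x)) (col (cell A i' (col ?s))) c"
    then have "c = col x + 1 \<or> between (col x) (col ?s) c" using s(2) by (auto simp: between_def)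
      then show "level A (SE x) < col_len A B c" using i' hs unfolding i'_def by auto
    qed
    ultimately show ?thesis unfolding run_def w_def by blast
  qed
  then show ?thesis
    using col_path_start[OF run_col_path[OF a(2)]] w_def by force
qed

lemma run_end_SW:
  assumes a: "x \<in> S" "SW x \<in> S"
  shows "col (tile_end (run A B x)) \<le> col (tile_end (run A B (SW x)))"
proof -
  let ?s = "tile_end (run A B x)"
  have s: "?s \<in> run A B x" "col x \<le> col ?s" using run_end a by auto
  have hs: "\<forall>c. between (col x) (col ?s) c \<longrightarrow> level A x < col_len A B c" "level A ?s = level A x"
    using run_memD[OF s(1)] by auto
  define i' where "i' = level A (SW x)"
  have i': "0 \<le> i'" "i' \<le> level A x" "i' < col_len A B (col x - 1)"
    using a unit_descent_prevD[OF descent_A, of "col x"] in_skew[of "SW x" A B]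
    unfolding i'_def level_SW col_len_def
    by auto
  define w where "w = cell A i' (col ?s)"
  have "w \<in> run A B (SW x)"
  proof -
    have "cell A i' (col ?s) \<in> S"
      using i' hs s unfolding cell_in_skew_iff by (auto simp: between_def)
    moreover have "level A (cell A i' (col ?s)) = level A (SW x)" using i'_def by simp
    moreover have "\<forall>c. between (col (SW x)) (col (cell A i' (col ?s))) c \<longrightarrow> level A (SW x) < col_len A B c"
    proof (intro allI impI)
      fix c assume "between (col (SW x)) (col (cell A i' (col ?s))) c"
    then have "c = col x - 1 \<or> between (col x) (col ?s) c" using s(2) by (auto simp: between_def)
      then show "level A (SW x) < col_len A B c" using i' hs unfolding i'_def by auto
    qed
    ultimately show ?thesis unfolding run_def w_def by blast
  qed
  then show ?thesis
    using col_path_end[OF run_col_path[OF a(2)]] w_def by force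
qed

lemma cover_expansive_runs: "cover_expansive runs S"
  unfolding cover_expansive_def using run_start_SE run_end_SW tile_of_runs by simp

lemma ce_tiling_exists: "\<exists>T. ce_dyck_tiling T S"
  using dyck_tiling_runs cover_expansive_runs unfolding ce_dyck_tiling_def by blast

end

lemma right_cond_iff_mirror: "right_cond n f \<longleftrightarrow> left_cond (\<lambda>c. n (- c)) (\<lambda>c. f (- c))"
proof
  assume R: "right_cond n f"
  show "left_cond (\<lambda>c. n (- c)) (\<lambda>c. f (- c))" unfolding left_cond_def
  proof (intro allI impI)
    fix p c assume a: "p \<le> c \<and> (\<forall>c'. p \<le> c' \<and> c' \<le> c \<longrightarrow> n (- (p - 1)) < n (- c'))"
    have "f (- c) \<le> f (- p)"
    proof (rule right_condD[OF R])
      show "- c \<le> - p" using a by simp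
      fix c' assume "- c \<le> c'" "c' \<le> - p"
      then show "n (- p + 1) < n c'" using a[THEN conjunct2, rule_format, of "- c'"] by simp
    qed
    then show "f (- c) \<le> f (- p)" .
  qed
next
  assume L: "left_cond (\<lambda>c. n (- c)) (\<lambda>c. f (- c))"
  show "right_cond n f" unfolding right_cond_def
  proof (intro allI impI)
    fix c q assume a: "c \<le> q \<and> (\<forall>c'. c \<le> c' \<and> c' \<le> q \<longrightarrow> n (q + 1) < n c')"
    have "f (- (- c)) \<le> f (- (- q))"
    proof (rule left_condD[OF L])
      show "- q \<le> - c" using a by simp
      fix c' assume "- q \<le> c'" "c' \<le> - c"
      then show "n (- (- q - 1)) < n (- c')"
        using a[THEN conjunct2, rule_format, of "- c'"] by (simp add: add.commute)
    qed
    then show "f c \<le> f q" by simp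
  qed
qed

lemma fun_upd_mirror: "(\<lambda>c::int. (g(j := v)) (- c)) = (\<lambda>c. g (- c))(- j := v)"
proof (rule ext)
  fix c show "(g(j := v)) (- c) = ((\<lambda>c. g (- c))(- j := v)) c" by (cases "c = - j") auto
qed

text \<open>\<open>n\<close> and \<open>f\<close> stand for the column lengths and base heights of a skew shape whose column \<open>j\<close> has
  an addable node on both boundaries; \<open>s\<close> is the first column of the run through the top cell
  (level \<open>r - 1\<close>) of column \<open>j\<close>.\<close>

locale valley =
  fixes n f :: "int \<Rightarrow> int" and j r s :: int
  assumes len_step_up: "\<And>c. n c - n (c - 1) \<le> 1" and len_step_down: "\<And>c. n (c - 1) - n c \<le> 1"
    and base_step_up: "\<And>c. n c - n (c - 1) = 1 \<Longrightarrow> f (c - 1) = f c + 1"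
    and base_step_down: "\<And>c. n (c - 1) - n c = 1 \<Longrightarrow> f c = f (c - 1) + 1"
    and len_prev: "n (j - 1) = r" and len_at: "n j = r" and len_next: "n (j + 1) = r"
    and base_prev: "f (j - 1) = f j + 1" and base_next: "f (j + 1) = f j + 1" and r_pos: "1 \<le> r"
    and s_le_j: "s \<le> j" and len_before_s: "n (s - 1) \<le> r - 1" and len_from_s: "\<And>c'. s \<le> c' \<Longrightarrow> c' \<le> j \<Longrightarrow> r \<le> n c'"
begin

lemma len_s: "n (s - 1) = r - 1" "n s = r"
  using len_before_s len_from_s[of s] s_le_j len_step_up[of s] len_from_s[of s] by auto
lemma base_before_s: "f (s - 1) = f s + 1" using base_step_up[of s] len_s by simp
lemma s_lt_j: "s < j" using s_le_j len_s len_prev by (cases "s = j") auto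

lemma shrink_crossing:
  assumes L: "left_cond n f" and fsj: "f s = f j + 1" and "p < j" "j \<le> c"
    and P: "\<And>c'. p \<le> c' \<Longrightarrow> c' \<le> c \<Longrightarrow> (n(j := r - 1)) (p - 1) < (n(j := r - 1)) c'"
  shows "(f(j := f j + 2)) c \<le> f p"
proof -
  have np: "(n(j := r - 1)) (p - 1) = n (p - 1)" using \<open>p < j\<close> by simp
  have npj: "n (p - 1) < r - 1" using P[of j] assms(3,4) np by simp
  have Pn: "n (p - 1) < n c'" if "p \<le> c'" "c' \<le> c" for c'
    using P[OF that] np npj len_at by (cases "c' = j") auto
  have fcp: "f c \<le> f p" using left_condD[OF L _ Pn] assms(3,4) by simp
  show ?thesis
  proof (cases "c = j")
    case False then show ?thesis using fcp by simp
  next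
    case True
    have "p < s"
    proof (rule ccontr)
      assume "\<not> p < s"
      then have "p - 1 = s - 1 \<or> (s \<le> p - 1 \<and> p - 1 \<le> j)" using assms(3) by auto
      then show False using len_s npj len_from_s[of "p - 1"] by auto
    qed
    then have "f (s - 1) \<le> f p"
      using left_condD[OF L, of p "s - 1"] Pn s_lt_j True by simp
    then show ?thesis using base_before_s fsj True by simp
  qed
qed

lemma left_cond_shrink:
  assumes L: "left_cond n f" and fsj: "f s = f j + 1"
  shows "left_cond (n(j := r - 1)) (f(j := f j + 2))"
  unfolding left_cond_def
proof (intro allI impI)
  fix p c
  assume a: "p \<le> c \<and> (\<forall>c'. p \<le> c' \<and> c' \<le> c \<longrightarrow> (n(j := r - 1)) (p - 1) < (n(j := r - 1)) c')"
  then have pc: "p \<le> c"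
    and P: "\<And>c'. p \<le> c' \<Longrightarrow> c' \<le> c \<Longrightarrow> (n(j := r - 1)) (p - 1) < (n(j := r - 1)) c'"
      by blast+
  consider "p = j" | "p = j + 1" | "p < j" "j \<le> c" | "c < j \<or> j + 1 < p" by linarith
  then show "(f(j := f j + 2)) c \<le> (f(j := f j + 2)) p"
  proof cases
    case 1
    then show ?thesis using P[of j] pc len_prev by simp
  next
    case 2
    have "f c \<le> f s"
    proof (rule left_condD[OF L])
      show "s \<le> c" using 2 pc s_le_j by simp
      fix c' assume "s \<le> c'" "c' \<le> c"
      then show "n (s - 1) < n c'" using len_s len_from_s[of c'] P[of c'] 2 by (cases "c' \<le> j") auto
    qed
    then show ?thesis using 2 pc fsj base_next by simp
  next
    case 3
    then show ?thesis using shrink_crossing[OF L fsj 3 P] by simp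
  next
    case 4
    have "f c \<le> f p"
    proof (rule left_condD[OF L pc])
      fix c' assume "p \<le> c'" "c' \<le> c"
      then show "n (p - 1) < n c'" using P[of c'] 4 by (cases "c' = j") auto
    qed
    then show ?thesis using 4 pc by auto
  qed
qed

lemma unshrink_crossing:
  assumes L: "left_cond (n(j := r - 1)) (f(j := f j + 2))" and fsj: "f s = f j + 1"
    and "p < j" "j \<le> c" and P: "\<And>c'. p \<le> c' \<Longrightarrow> c' \<le> c \<Longrightarrow> n (p - 1) < n c'"
  shows "f c \<le> f p"
proof (cases "n (p - 1) < r - 1")
  case True
  have "(f(j := f j + 2)) c \<le> (f(j := f j + 2)) p"
  proof (rule left_condD[OF L])
    show "p \<le> c" using assms(3,4) by simp
    fix c' assume "p \<le> c'" "c' \<le> c"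
    then show "(n(j := r - 1)) (p - 1) < (n(j := r - 1)) c'" using P[of c'] True assms(3) by auto
  qed
  then show ?thesis using assms(3) by (cases "c = j") auto
next
  case False
  then have npr: "n (p - 1) = r - 1" using P[of j] assms(3,4) len_at by simp
  have ps: "p = s"
  proof (rule ccontr)
    assume "p \<noteq> s"
    then have "p < s \<or> (s \<le> p - 1 \<and> p - 1 \<le> j)" using assms(3) by auto
    then show False
      using P[of "s - 1"] len_s npr s_lt_j assms(4) len_from_s[of "p - 1"] by auto
  qed
  consider "c < j" | "c = j" | "j < c" by linarith
  then show ?thesis
  proof cases
    case 1
    have "(f(j := f j + 2)) c \<le> (f(j := f j + 2)) s"
    proof (rule left_condD[OF L])
      show "s \<le> c" using assms(4) 1 by simp
      fix c' assume "s \<le> c'" "c' \<le> c"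
      then show "(n(j := r - 1)) (s - 1) < (n(j := r - 1)) c'" using P[of c'] ps 1 by auto
    qed
    then show ?thesis using 1 ps s_lt_j by simp
  next
    case 2
    then show ?thesis using ps fsj by simp
  next
    case 3
    have "(f(j := f j + 2)) c \<le> (f(j := f j + 2)) (j + 1)"
    proof (rule left_condD[OF L])
      show "j + 1 \<le> c" using 3 by simp
      fix c' assume "j + 1 \<le> c'" "c' \<le> c"
      then show "(n(j := r - 1)) (j + 1 - 1) < (n(j := r - 1)) c'" using P[of c'] ps npr s_lt_j by auto
    qed
    then show ?thesis using 3 ps fsj base_next by simp
  qed
qed

lemma left_cond_unshrink:
  assumes L: "left_cond (n(j := r - 1)) (f(j := f j + 2))" and fsj: "f s = f j + 1"
  shows "left_cond n f"
  unfolding left_cond_def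
proof (intro allI impI)
  fix p c
  assume a: "p \<le> c \<and> (\<forall>c'. p \<le> c' \<and> c' \<le> c \<longrightarrow> n (p - 1) < n c')"
  then have pc: "p \<le> c" and P: "\<And>c'. p \<le> c' \<Longrightarrow> c' \<le> c \<Longrightarrow> n (p - 1) < n c'"
    by blast+
  consider "p = j" | "p = j + 1" | "p < j" "j \<le> c" | "c < j \<or> j + 1 < p" by linarith
  then show "f c \<le> f p"
  proof cases
    case 1
    then show ?thesis using P[of j] pc len_prev len_at by simp
  next
    case 2
    have "(f(j := f j + 2)) c \<le> (f(j := f j + 2)) (j + 1)"
    proof (rule left_condD[OF L])
      show "j + 1 \<le> c" using 2 pc by simp
      fix c' assume "j + 1 \<le> c'" "c' \<le> c"
      then show "(n(j := r - 1)) (j + 1 - 1) < (n(j := r - 1)) c'" using P[of c'] 2 len_at by auto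
    qed
    then show ?thesis using 2 pc by simp
  next
    case 3
    then show ?thesis using unshrink_crossing[OF L fsj 3 P] by blast
  next
    case 4
    have "(f(j := f j + 2)) c \<le> (f(j := f j + 2)) p"
    proof (rule left_condD[OF L pc])
      fix c' assume "p \<le> c'" "c' \<le> c"
      then show "(n(j := r - 1)) (p - 1) < (n(j := r - 1)) c'" using P[of c'] 4 by auto
    qed
    then show ?thesis using 4 pc by auto
  qed
qed
lemma shrink_run_start:
  assumes L: "left_cond (n(j := r - 1)) (f(j := f j + 2))" and R: "right_cond (n(j := r - 1)) (f(j := f j + 2))"
  shows "f s = f j + 1"
proof -
  have "(f(j := f j + 2)) (j - 1) \<le> (f(j := f j + 2)) s"
  proof (rule left_condD[OF L])
    show "s \<le> j - 1" using s_lt_j by simp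
    fix c' assume "s \<le> c'" "c' \<le> j - 1"
    then show "(n(j := r - 1)) (s - 1) < (n(j := r - 1)) c'" using len_from_s[of c'] len_s by auto
  qed
  moreover have "(f(j := f j + 2)) s \<le> (f(j := f j + 2)) (j - 1)"
  proof (rule right_condD[OF R])
    show "s \<le> j - 1" using s_lt_j by simp
    fix c' assume "s \<le> c'" "c' \<le> j - 1"
    then show "(n(j := r - 1)) (j - 1 + 1) < (n(j := r - 1)) c'" using len_from_s[of c'] by auto
  qed
  ultimately show ?thesis using s_lt_j base_prev by simp
qed

lemma left_cond_raise:
  assumes L: "left_cond n f" and fsj: "f j + 2 \<le> f s"
  shows "left_cond n (f(j := f j + 2))"
  unfolding left_cond_def
proof (intro allI impI)
  fix p c
  assume a: "p \<le> c \<and> (\<forall>c'. p \<le> c' \<and> c' \<le> c \<longrightarrow> n (p - 1) < n c')"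
  have pc: "p \<le> c" using a by blast
  have P: "\<And>c'. p \<le> c' \<Longrightarrow> c' \<le> c \<Longrightarrow> n (p - 1) < n c'"
    using a by blast
  have pj: "p \<noteq> j" using P[of j] pc len_prev len_at by auto
  have fcp: "f c \<le> f p" using left_condD[OF L pc P] by blast
  show "(f(j := f j + 2)) c \<le> (f(j := f j + 2)) p"
  proof (cases "c = j")
    case False then show ?thesis using fcp pj by simp
  next
    case cj: True
    have npj: "n (p - 1) < r" using P[of j] pc cj len_at by simp
    have ps: "p \<le> s"
    proof (rule ccontr)
      assume "\<not> p \<le> s"
      then show False using len_from_s[of "p - 1"] npj pc cj by simp
    qed
    show ?thesis
    proof (cases "p = s")
      case True then show ?thesis using fsj cj pj by simp
    next
      case False
      have "f (s - 1) \<le> f p" using left_condD[OF L, of p "s - 1"] ps False P s_lt_j cj by simp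
      then show ?thesis using base_before_s fsj cj pj by simp
    qed
  qed
qed

lemma left_cond_unraise:
  assumes L: "left_cond n (f(j := f j + 2))"
  shows "left_cond n f"
  unfolding left_cond_def
proof (intro allI impI)
  fix p c
  assume a: "p \<le> c \<and> (\<forall>c'. p \<le> c' \<and> c' \<le> c \<longrightarrow> n (p - 1) < n c')"
  have pc: "p \<le> c" using a by blast
  have P: "\<And>c'. p \<le> c' \<Longrightarrow> c' \<le> c \<Longrightarrow> n (p - 1) < n c'"
    using a by blast
  have pj: "p \<noteq> j" using P[of j] pc len_prev len_at by auto
  have "(f(j := f j + 2)) c \<le> (f(j := f j + 2)) p" using left_condD[OF L pc P] by blast
  then show "f c \<le> f p" using pj by (cases "c = j") auto
qed

lemma raise_run_start:
  assumes L: "left_cond n (f(j := f j + 2))"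
  shows "f j + 2 \<le> f s"
proof -
  have "(f(j := f j + 2)) j \<le> (f(j := f j + 2)) s"
  proof (rule left_condD[OF L])
    show "s \<le> j" using s_le_j .
    fix c' assume "s \<le> c'" "c' \<le> j"
    then show "n (s - 1) < n c'" using len_from_s[of c'] len_s by auto
  qed
  then show ?thesis using s_lt_j by simp
qed

end

lemma valley_mirror:
  assumes "valley n f j r s0"
    and j_le_e: "j \<le> e" and len_after_e: "n (e + 1) \<le> r - 1" and len_to_e: "\<And>c'. j \<le> c' \<Longrightarrow> c' \<le> e \<Longrightarrow> r \<le> n c'"
  shows "valley (\<lambda>c. n (- c)) (\<lambda>c. f (- c)) (- j) r (- e)"
proof -
  interpret valley n f j r s0 by fact
  show ?thesis
  proof
    fix c
    show "n (- c) - n (- (c - 1)) \<le> 1" using len_step_down[of "1 - c"] by simp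
    show "n (- (c - 1)) - n (- c) \<le> 1" using len_step_up[of "1 - c"] by simp
    show "n (- c) - n (- (c - 1)) = 1 \<Longrightarrow> f (- (c - 1)) = f (- c) + 1"
      using base_step_down[of "1 - c"] by simp
    show "n (- (c - 1)) - n (- c) = 1 \<Longrightarrow> f (- c) = f (- (c - 1)) + 1"
      using base_step_up[of "1 - c"] by simp
  next
    show "n (- (- j - 1)) = r" using len_next by (simp add: add.commute)
    show "n (- (- j)) = r" using len_at by simp
    show "n (- (- j + 1)) = r" using len_prev by simp
    show "f (- (- j - 1)) = f (- (- j)) + 1" using base_next by (simp add: add.commute)
    show "f (- (- j + 1)) = f (- (- j)) + 1" using base_prev by simp
    show "1 \<le> r" using r_pos .
    show "- e \<le> - j" using j_le_e by simp
    show "n (- (- e - 1)) \<le> r - 1" using len_after_e by (simp add: add.commute)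
    fix c' assume "- e \<le> c'" "c' \<le> - j"
    then show "r \<le> n (- c')" using len_to_e[of "- c'"] by simp
  qed
qed

lemma conds_run_ends_eq:
  assumes L: "left_cond n f" and R: "right_cond n f"
    and "s \<le> e" "n (s - 1) < r" "n (e + 1) < r" "\<And>c'. s \<le> c' \<Longrightarrow> c' \<le> e \<Longrightarrow> r \<le> n c'"
  shows "f s = f e"
proof -
  have "f e \<le> f s" using left_condD[OF L, of s e] assms by fastforce
  moreover have "f s \<le> f e" using right_condD[OF R, of s e] assms by fastforce
  ultimately show ?thesis by simp
qed

lemma right_cond_fun_upd_iff_mirror:
  "right_cond (g(j := v)) (h(j := w)) \<longleftrightarrow> left_cond ((\<lambda>c. g (- c))(- j := v)) ((\<lambda>c. h (- c))(- j := w))"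
  by (simp only: right_cond_iff_mirror fun_upd_mirror)

locale valley_run = valley n f j r s
  for n f :: "int \<Rightarrow> int" and j r s :: int +
  fixes e :: int
  assumes j_le_e: "j \<le> e" and len_after_e: "n (e + 1) \<le> r - 1"
    and len_to_e: "\<And>c'. j \<le> c' \<Longrightarrow> c' \<le> e \<Longrightarrow> r \<le> n c'"

sublocale valley_run \<subseteq> mirror: valley "\<lambda>c. n (- c)" "\<lambda>c. f (- c)" "- j" r "- e"
  by (rule valley_mirror) (unfold_locales, use j_le_e len_after_e len_to_e in auto)

context valley_run
begin

lemma run_ends_eq:
  assumes "left_cond n f" "right_cond n f"
  shows "f s = f e"
proof (rule conds_run_ends_eq[OF assms])
  show "s \<le> e" using s_le_j j_le_e by simp
  show "n (s - 1) < r" "n (e + 1) < r" using len_before_s len_after_e by auto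
  show "r \<le> n c'" if "s \<le> c'" "c' \<le> e" for c'
    using that len_from_s len_to_e by (cases "c' \<le> j") auto
qed

lemma conds_shrink_iff:
  "left_cond n f \<and> right_cond n f \<and> f s = f j + 1 \<longleftrightarrow>
   left_cond (n(j := r - 1)) (f(j := f j + 2)) \<and> right_cond (n(j := r - 1)) (f(j := f j + 2))"
proof
  assume conds: "left_cond n f \<and> right_cond n f \<and> f s = f j + 1"
  then have "f e = f j + 1" using run_ends_eq by simp
  then have "left_cond ((\<lambda>c. n (- c))(- j := r - 1)) ((\<lambda>c. f (- c))(- j := f j + 2))"
    using conds mirror.left_cond_shrink by (simp add: right_cond_iff_mirror)
  then show "left_cond (n(j := r - 1)) (f(j := f j + 2)) \<and> right_cond (n(j := r - 1)) (f(j := f j + 2))"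
    using conds left_cond_shrink by (simp add: right_cond_fun_upd_iff_mirror)
next
  assume conds: "left_cond (n(j := r - 1)) (f(j := f j + 2)) \<and> right_cond (n(j := r - 1)) (f(j := f j + 2))"
  then have mirrored: "left_cond ((\<lambda>c. n (- c))(- j := r - 1)) ((\<lambda>c. f (- c))(- j := f j + 2))"
    "right_cond ((\<lambda>c. n (- c))(- j := r - 1)) ((\<lambda>c. f (- c))(- j := f j + 2))"
    by (simp_all add: right_cond_fun_upd_iff_mirror)
  have "f s = f j + 1" using conds shrink_run_start by blast
  moreover have "f e = f j + 1" using mirror.shrink_run_start mirrored by simp
  ultimately show "left_cond n f \<and> right_cond n f \<and> f s = f j + 1"
    using conds mirrored left_cond_unshrink mirror.left_cond_unshrink
    by (simp add: right_cond_iff_mirror)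
qed

lemma conds_raise_iff:
  "left_cond n f \<and> right_cond n f \<and> f j + 2 \<le> f s \<longleftrightarrow>
   left_cond n (f(j := f j + 2)) \<and> right_cond n (f(j := f j + 2))"
proof
  assume conds: "left_cond n f \<and> right_cond n f \<and> f j + 2 \<le> f s"
  then have "f j + 2 \<le> f e" using run_ends_eq by simp
  then have "left_cond (\<lambda>c. n (- c)) ((\<lambda>c. f (- c))(- j := f j + 2))"
    using conds mirror.left_cond_raise by (simp add: right_cond_iff_mirror)
  moreover have "left_cond n (f(j := f j + 2))" using conds left_cond_raise by blast
  ultimately show "left_cond n (f(j := f j + 2)) \<and> right_cond n (f(j := f j + 2))"
    by (simp only: right_cond_iff_mirror fun_upd_mirror)
next
  assume conds: "left_cond n (f(j := f j + 2)) \<and> right_cond n (f(j := f j + 2))"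
  then have mirrored: "left_cond (\<lambda>c. n (- c)) ((\<lambda>c. f (- c))(- j := f j + 2))"
    by (simp only: right_cond_iff_mirror fun_upd_mirror)
  have "f j + 2 \<le> f s" using conds raise_run_start by blast
  moreover have "left_cond n f" using conds left_cond_unraise by blast
  moreover have "right_cond n f"
    using mirror.left_cond_unraise mirrored by (simp add: right_cond_iff_mirror)
  ultimately show "left_cond n f \<and> right_cond n f \<and> f j + 2 \<le> f s" by blast
qed

end

lemma partition_pos: "is_partition D \<Longrightarrow> x \<in> D \<Longrightarrow> 1 \<le> fst x \<and> 1 \<le> snd x"
  unfolding is_partition_def young_def by auto

lemma partition_down_closed:
  assumes "is_partition D" "x \<in> D" "1 \<le> fst y" "1 \<le> snd y" "fst y \<le> fst x" "snd y \<le> snd x"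
  shows "y \<in> D"
proof -
  obtain ls where ls: "sorted_wrt (\<ge>) ls" "D = young ls"
    using assms(1) unfolding is_partition_def by blast
  obtain a b where x: "x = (a, b)" by (cases x)
  obtain c d where y: "y = (c, d)" by (cases y)
  have xa: "1 \<le> a" "a \<le> int (length ls)" "1 \<le> b" "b \<le> int (ls ! nat (a - 1))"
    using assms(2) ls(2) x unfolding young_def by auto
  have "ls ! nat (a - 1) \<le> ls ! nat (c - 1)"
  proof (cases "c = a")
    case True then show ?thesis by simp
  next
    case False
    then have "nat (c - 1) < nat (a - 1)" "nat (a - 1) < length ls" using assms(3,5) xa x y by auto
    then show ?thesis using ls(1) unfolding sorted_wrt_iff_nth_less by blast
  qed
  then show ?thesis using xa assms(3-6) x y ls(2) unfolding young_def by auto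
qed

lemma partition_finite: "is_partition D \<Longrightarrow> finite D"
proof -
  assume "is_partition D"
  then obtain ls where D: "D = young ls" unfolding is_partition_def by blast
  have "young ls \<subseteq> Sigma {1..int (length ls)} (\<lambda>a. {1..int (ls ! nat (a - 1))})"
    unfolding young_def by auto
  then show "finite D" using D by (auto intro: finite_subset)
qed

definition filled :: "node set \<Rightarrow> node set" where "filled D = {x. fst x \<le> 0 \<or> snd x \<le> 0 \<or> x \<in> D}"

lemma filled_down_closed: "is_partition D \<Longrightarrow> x \<in> filled D \<Longrightarrow> fst y \<le> fst x \<Longrightarrow> snd y \<le> snd x \<Longrightarrow> y \<in> filled D"
  unfolding filled_def using partition_down_closed[of D x y] by force

lemma down_closed_threshold:
  fixes P :: "int \<Rightarrow> bool"
  assumes down: "\<And>a a'. P a \<Longrightarrow> a' \<le> a \<Longrightarrow> P a'" and "P a1" "\<not> P a2"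
  shows "\<exists>al. \<forall>a. P a \<longleftrightarrow> a < al"
  using assms(2,3)
proof (induction "nat (a2 - a1)" arbitrary: a1 rule: less_induct)
  case less
  have lt: "a1 < a2"
  proof (rule ccontr)
    assume "\<not> a1 < a2" then have "a2 \<le> a1" by simp
    then show False using less.prems down[of a1 a2] by simp
  qed
  show ?case
  proof (cases "P (a1 + 1)")
    case True
    have "nat (a2 - (a1 + 1)) < nat (a2 - a1)" using lt by simp
    then show ?thesis using less.hyps[OF _ True less.prems(2)] by blast
  next
    case False
    have "\<forall>a. P a \<longleftrightarrow> a < a1 + 1"
    proof
      fix a show "P a \<longleftrightarrow> a < a1 + 1"
      proof
        assume "P a" then show "a < a1 + 1" using False down[of a "a1 + 1"] by force
      next
        assume "a < a1 + 1" then show "P a" using less.prems(1) down[of a1 a] by simp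
      qed
    qed
    then show ?thesis by blast
  qed
qed

text \<open>The row of the first node of column \<open>c\<close> outside \<open>D\<close>; nodes outside the positive
  quadrant count as inside, which makes each column of a partition an initial segment.\<close>

definition boundary :: "node set \<Rightarrow> int \<Rightarrow> int" where
  "boundary D c = (THE al. \<forall>a. (a, a + c) \<in> filled D \<longleftrightarrow> a < al)"

lemma boundary_char:
  assumes "is_partition D" shows "(a, a + c) \<in> filled D \<longleftrightarrow> a < boundary D c"
proof -
  define P where "P a \<longleftrightarrow> (a, a + c) \<in> filled D" for a
  have down: "\<And>a a'. P a \<Longrightarrow> a' \<le> a \<Longrightarrow> P a'" unfolding P_def
    using filled_down_closed[OF assms] by fastforce
  have p1: "P (min 0 (- c))" unfolding P_def filled_def by auto
  have fD: "finite D" using partition_finite[OF assms] .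
  define K where "K = Max (insert 0 (fst ` D))"
  have K0: "0 \<le> K" unfolding K_def using fD by simp
  have Kx: "\<And>x. x \<in> D \<Longrightarrow> fst x \<le> K" unfolding K_def using fD by simp
  define M where "M = K + 1 + \<bar>c\<bar>"
  have "(M, M + c) \<notin> D" using Kx[of "(M, M + c)"] unfolding M_def by auto
  moreover have "0 < M" "0 < M + c" using K0 unfolding M_def by auto
  ultimately have p2: "\<not> P M" unfolding P_def filled_def by auto
  obtain al where al: "\<forall>a. P a \<longleftrightarrow> a < al"
    using down_closed_threshold[of P "min 0 (- c)" M] down p1 p2 by blast
  have "boundary D c = al" unfolding boundary_def
  proof (rule the_equality)
    show "\<forall>a. (a, a + c) \<in> filled D \<longleftrightarrow> a < al" using al P_def by simp
    fix al' assume "\<forall>a. (a, a + c) \<in> filled D \<longleftrightarrow> a < al'"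
    then have "\<forall>a. a < al' \<longleftrightarrow> a < al" using al P_def by simp
    then show "al' = al" by (metis linorder_neqE_linordered_idom order_less_irrefl)
  qed
  then show ?thesis using al P_def by simp
qed

lemma filled_iff_boundary: "is_partition D \<Longrightarrow> x \<in> filled D \<longleftrightarrow> fst x < boundary D (col x)"
  using boundary_char[of D "fst x" "col x"] by (simp add: col_def)

lemma unit_descent_boundary: assumes "is_partition D" shows "unit_descent (boundary D)"
  unfolding unit_descent_def
proof
  fix c
  define a where "a = boundary D c"
  have "(a - 1, a - 1 + c) \<in> filled D" using boundary_char[OF assms] a_def by simp
  then have "(a - 2, a - 2 + (c + 1)) \<in> filled D" using filled_down_closed[OF assms] by fastforce
  then have g: "a - 2 < boundary D (c + 1)" using boundary_char[OF assms] by blast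
  have "(a, a + c) \<notin> filled D" using boundary_char[OF assms] a_def by simp
  then have "(a, a + (c + 1)) \<notin> filled D" using filled_down_closed[OF assms] by fastforce
  then have "\<not> a < boundary D (c + 1)" using boundary_char[OF assms] by blast
  then show "boundary D (c + 1) = boundary D c \<or> boundary D (c + 1) = boundary D c - 1"
    using g a_def by auto
qed

lemma boundary_mono: "is_partition D \<Longrightarrow> is_partition E \<Longrightarrow> D \<subseteq> E \<Longrightarrow> boundary D c \<le> boundary E c"
proof -
  assume pD: "is_partition D" and pE: "is_partition E" and sub: "D \<subseteq> E"
  have "(boundary D c - 1, boundary D c - 1 + c) \<in> filled D" using boundary_char[OF pD] by simp
  then have "(boundary D c - 1, boundary D c - 1 + c) \<in> filled E"
    using sub unfolding filled_def by auto
  then show ?thesis using boundary_char[OF pE] by fastforce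
qed

lemma diff_eq_skew:
  assumes "is_partition L" "is_partition M"
  shows "L - M = skew (boundary M) (boundary L)"
proof (intro set_eqI iffI)
  fix x assume x: "x \<in> L - M"
  then have pos: "1 \<le> fst x \<and> 1 \<le> snd x" using partition_pos assms by blast
  have "x \<in> filled L" using x unfolding filled_def by auto
  moreover have xM: "x \<notin> M" using x by blast
  have "x \<notin> filled M" using xM pos by (simp add: filled_def)
  ultimately show "x \<in> skew (boundary M) (boundary L)"
    using filled_iff_boundary assms \<open>x \<notin> filled M\<close> unfolding skew_def by fastforce
next
  fix x assume "x \<in> skew (boundary M) (boundary L)"
  then have "boundary M (col x) \<le> fst x" "fst x < boundary L (col x)" unfolding skew_def by auto
  then have "x \<in> filled L" "x \<notin> filled M"
    using filled_iff_boundary[OF assms(1), of x] filled_iff_boundary[OF assms(2), of x] by auto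
  then show "x \<in> L - M" unfolding filled_def by auto
qed

lemma boundary_insert:
  assumes pD: "is_partition D" and pD': "is_partition (insert z D)" and zD: "z \<notin> D" and cz: "col z = j"
  shows "boundary D j = fst z" "boundary (insert z D) j = fst z + 1"
    "\<And>c. c \<noteq> j \<Longrightarrow> boundary (insert z D) c = boundary D c"
    "boundary D (j - 1) = fst z + 1" "boundary D (j + 1) = fst z"
proof -
  have zp: "1 \<le> fst z \<and> 1 \<le> snd z" using partition_pos[OF pD'] by blast
  have zform: "z = (fst z, fst z + j)" using cz by (simp add: col_def prod_eq_iff)
  have filled_insert: "filled (insert z D) = insert z (filled D)" unfolding filled_def by auto
  have zn: "z \<notin> filled D" using zD zp unfolding filled_def by auto
  have lo: "boundary D j \<le> fst z" using filled_iff_boundary[OF pD, of z] zn cz by simp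
  have hi1: "fst z < boundary (insert z D) j"
    using filled_iff_boundary[OF pD', of z] filled_insert cz by simp
  have under_z: "(a, a + j) \<in> filled D" if "a < fst z" for a
  proof -
    have sz: "snd z = fst z + j" using cz by (simp add: col_def)
    have "z \<in> filled (insert z D)" using filled_insert by simp
    then have "(a, a + j) \<in> filled (insert z D)"
      using filled_down_closed[OF pD', of z "(a, a + j)"] that sz by simp
    moreover have "(a, a + j) \<noteq> z" using that by auto
    ultimately show ?thesis using filled_insert by auto
  qed
  have "fst z \<le> boundary D j"
  proof (rule ccontr)
    assume "\<not> ?thesis"
    then show False using under_z[of "boundary D j"] boundary_char[OF pD, of "boundary D j" j] by simp
  qed
  then show aj: "boundary D j = fst z" using lo by simp
  have "(fst z + 1, fst z + 1 + j) \<notin> filled (insert z D)"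
    using filled_insert boundary_char[OF pD, of "fst z + 1" j] aj by (auto simp: prod_eq_iff)
  then have "\<not> fst z + 1 < boundary (insert z D) j" using boundary_char[OF pD'] by blast
  then show "boundary (insert z D) j = fst z + 1" using hi1 by simp
  show "\<And>c. c \<noteq> j \<Longrightarrow> boundary (insert z D) c = boundary D c"
  proof -
    fix c assume cj: "c \<noteq> j"
    have "\<forall>a. (a, a + c) \<in> filled (insert z D) \<longleftrightarrow> (a, a + c) \<in> filled D"
      using filled_insert cj zform by (auto simp: prod_eq_iff)
    then have "\<forall>a. a < boundary (insert z D) c \<longleftrightarrow> a < boundary D c"
      using boundary_char[OF pD] boundary_char[OF pD'] by blast
    then show "boundary (insert z D) c = boundary D c"
      by (metis linorder_neqE_linordered_idom order_less_irrefl)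
  qed
  have st: "unit_descent (boundary D)" using unit_descent_boundary[OF pD] .
  have "SW z \<in> filled (insert z D)"
    using filled_down_closed[OF pD', of z "SW z"] filled_insert by (simp add: SW_def)
  then have "SW z \<in> filled D" using filled_insert by (auto simp: SW_def prod_eq_iff)
  then have "fst z < boundary D (j - 1)" using filled_iff_boundary[OF pD] cz by simp
  then show "boundary D (j - 1) = fst z + 1" using unit_descent_prevD[OF st, of j] aj by auto
  have "SE z \<in> filled (insert z D)"
    using filled_down_closed[OF pD', of z "SE z"] filled_insert by (simp add: SE_def)
  then have "SE z \<in> filled D" using filled_insert by (auto simp: SE_def prod_eq_iff)
  then have "fst z - 1 < boundary D (j + 1)" using filled_iff_boundary[OF pD] cz by simp
  then show "boundary D (j + 1) = fst z" using unit_descent_nextD[OF st, of j] aj by auto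
qed

lemma boundary_addable:
  assumes "is_partition D" "addable D z"
  shows "boundary (insert z D) = (boundary D)(col z := fst z + 1)"
    "boundary D (col z - 1) = fst z + 1" "boundary D (col z) = fst z" "boundary D (col z + 1) = fst z"
proof -
  have "is_partition (insert z D)" "z \<notin> D" using assms(2) unfolding addable_def by auto
  note ins = boundary_insert[OF assms(1) this refl]
  show "boundary (insert z D) = (boundary D)(col z := fst z + 1)" using ins by (auto simp: fun_eq_iff)
  show "boundary D (col z - 1) = fst z + 1" "boundary D (col z) = fst z" "boundary D (col z + 1) = fst z"
    using ins by auto
qed

lemma maximal_interval_left:
  fixes P :: "int \<Rightarrow> bool" and c0 :: int
  assumes fin: "finite {c. P c}" and "P c0"
  shows "\<exists>s\<le>c0. \<not> P (s - 1) \<and> (\<forall>c'. s \<le> c' \<and> c' \<le> c0 \<longrightarrow> P c')"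
proof (rule ccontr)
  assume H: "\<not> ?thesis"
  have all: "\<forall>c'. c0 - int k \<le> c' \<and> c' \<le> c0 \<longrightarrow> P c'" for k
  proof (induction k)
    case 0 then show ?case using assms(2) by auto
  next
    case (Suc k)
    have H': "\<And>s. s \<le> c0 \<Longrightarrow> (\<forall>c'. s \<le> c' \<and> c' \<le> c0 \<longrightarrow> P c') \<Longrightarrow> P (s - 1)"
      using H by blast
    have "P (c0 - int k - 1)" using H'[of "c0 - int k"] Suc.IH by simp
    then show ?case
    proof (intro allI impI)
      fix c' assume "P (c0 - int k - 1)" "c0 - int (Suc k) \<le> c' \<and> c' \<le> c0"
      then show "P c'" using Suc.IH by (cases "c' = c0 - int k - 1") auto
    qed
  qed
  have "P (c0 - int k)" for k using spec[OF all[of k], of "c0 - int k"] by simp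
  then have "range (\<lambda>k. c0 - int k) \<subseteq> {c. P c}" by auto
  moreover have "infinite (range (\<lambda>k::nat. c0 - int k))"
  proof
    assume "finite (range (\<lambda>k::nat. c0 - int k))"
    then have "finite (UNIV :: nat set)" by (rule finite_imageD) (simp add: inj_on_def)
    then show False by simp
  qed
  ultimately show False using fin finite_subset by blast
qed

lemma maximal_interval_right:
  fixes P :: "int \<Rightarrow> bool" and c0 :: int
  assumes fin: "finite {c. P c}" and "P c0"
  shows "\<exists>e\<ge>c0. \<not> P (e + 1) \<and> (\<forall>c'. c0 \<le> c' \<and> c' \<le> e \<longrightarrow> P c')"
proof -
  have "finite {c. P (- c)}"
  proof -
    have "finite (uminus -` {c. P c})" by (rule finite_vimageI[OF fin]) (simp add: inj_def)
    then show ?thesis by (simp add: vimage_def)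
  qed
  then obtain s where s0: "s \<le> - c0" "\<not> P (- (s - 1))" "\<forall>c'. s \<le> c' \<and> c' \<le> - c0 \<longrightarrow> P (- c')"
    using maximal_interval_left[of "\<lambda>c. P (- c)" "- c0"] assms(2) by auto
  have s1: "c0 \<le> - s" using s0(1) by simp
  have s2: "\<not> P (- s + 1)" using s0(2) by simp
  have s3: "P c'" if "c0 \<le> c'" "c' \<le> - s" for c'
    using s0(3)[rule_format, of "- c'"] that by simp
  show ?thesis using s1 s2 s3 by blast
qed

lemma ce_tiling_exists_iff:
  assumes "unit_descent A" "unit_descent B" "\<And>c. A c \<le> B c" "finite (skew A B)"
  shows "(\<exists>T. ce_dyck_tiling T (skew A B)) \<longleftrightarrow>
         left_cond (col_len A B) (base_ht A) \<and> right_cond (col_len A B) (base_ht A)"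
proof
  assume "\<exists>T. ce_dyck_tiling T (skew A B)"
  then obtain T where "ce_dyck_tiling T (skew A B)" by blast
  then interpret skew_ce_tiling A B T using assms by unfold_locales
  show "left_cond (col_len A B) (base_ht A) \<and> right_cond (col_len A B) (base_ht A)"
    using left_cond_holds right_cond_holds by blast
next
  assume "left_cond (col_len A B) (base_ht A) \<and> right_cond (col_len A B) (base_ht A)"
  then interpret skew_conds A B using assms by unfold_locales auto
  show "\<exists>T. ce_dyck_tiling T (skew A B)" by (rule ce_tiling_exists)
qed

lemma ce_tiling_exists_iff_partitions:
  assumes "is_partition L" "is_partition M" "M \<subseteq> L"
  shows "(\<exists>T. ce_dyck_tiling T (L - M)) \<longleftrightarrow>
         left_cond (col_len (boundary M) (boundary L)) (base_ht (boundary M)) \<and>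
         right_cond (col_len (boundary M) (boundary L)) (base_ht (boundary M))"
proof -
  have "finite (L - M)" using partition_finite[OF assms(1)] by simp
  then show ?thesis
    using ce_tiling_exists_iff unit_descent_boundary boundary_mono diff_eq_skew assms by metis
qed

lemma ex_ce_tiling_depth_iff:
  assumes depth: "\<And>T t. ce_dyck_tiling T S \<Longrightarrow> t \<in> T \<Longrightarrow> x \<in> t \<Longrightarrow> depth t x = d"
    and "x \<in> S"
  shows "(\<exists>T. ce_dyck_tiling T S \<and> (\<exists>t\<in>T. x \<in> t \<and> P (depth t x))) \<longleftrightarrow>
         (\<exists>T. ce_dyck_tiling T S) \<and> P d"
proof
  assume "(\<exists>T. ce_dyck_tiling T S) \<and> P d"
  then obtain T where T: "ce_dyck_tiling T S" and "P d" by blast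
  moreover obtain t where "t \<in> T" "x \<in> t"
    using T \<open>x \<in> S\<close> unfolding ce_dyck_tiling_def dyck_tiling_def by blast
  ultimately show "\<exists>T. ce_dyck_tiling T S \<and> (\<exists>t\<in>T. x \<in> t \<and> P (depth t x))"
    using depth by metis
qed (use depth in blast)

locale addable_columns =
  fixes lam mu :: "node set" and l m :: node and j :: int
  assumes part_lam: "is_partition lam" and part_mu: "is_partition mu"
    and addable_l: "addable lam l" and col_l: "col l = j"
    and addable_m: "addable mu m" and col_m: "col m = j"
    and insert_m_sub: "insert m mu \<subseteq> lam"
begin

abbreviation "len \<equiv> col_len (boundary mu) (boundary lam)"
abbreviation "base \<equiv> base_ht (boundary mu)"
abbreviation "r \<equiv> fst l - fst m"
abbreviation "a \<equiv> (fst l - 1, snd l - 1)"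

lemma part_lam': "is_partition (insert l lam)" and part_mu': "is_partition (insert m mu)"
  using addable_l addable_m unfolding addable_def by auto

lemmas boundary_mu = boundary_addable[OF part_mu addable_m, unfolded col_m]
lemmas boundary_lam = boundary_addable[OF part_lam addable_l, unfolded col_l]

lemma r_pos: "1 \<le> r"
proof -
  have "m \<in> lam" using insert_m_sub by blast
  then have "m \<in> filled lam" unfolding filled_def by blast
  then show ?thesis using filled_iff_boundary[OF part_lam] col_m boundary_lam(3) by simp
qed

lemma a_eq_cell: "a = cell (boundary mu) (r - 1) j"
  using col_l boundary_mu(3) unfolding cell_def col_def by (simp add: prod_eq_iff)

lemma a_mem: "a \<in> lam - mu"
  using r_pos boundary_mu boundary_lam
  by (simp add: a_eq_cell diff_eq_skew[OF part_lam part_mu] cell_in_skew_iff col_len_def)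

lemma ce_lower_iff: "(\<exists>T. ce_dyck_tiling T (lam - mu)) \<longleftrightarrow> left_cond len base \<and> right_cond len base"
  using ce_tiling_exists_iff_partitions[OF part_lam part_mu] insert_m_sub by blast

lemma ce_shrink_iff:
  "(\<exists>T. ce_dyck_tiling T (lam - insert m mu)) \<longleftrightarrow>
   left_cond (len(j := r - 1)) (base(j := base j + 2)) \<and> right_cond (len(j := r - 1)) (base(j := base j + 2))"
proof -
  have "col_len (boundary (insert m mu)) (boundary lam) = len(j := r - 1)"
    "base_ht (boundary (insert m mu)) = base(j := base j + 2)"
    using boundary_mu boundary_lam by (auto simp: fun_eq_iff col_len_def base_ht_def)
  then show ?thesis using ce_tiling_exists_iff_partitions[OF part_lam part_mu' insert_m_sub] by simp
qed

lemma ce_raise_iff: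
  "(\<exists>T. ce_dyck_tiling T (insert l lam - insert m mu)) \<longleftrightarrow>
   left_cond len (base(j := base j + 2)) \<and> right_cond len (base(j := base j + 2))"
proof -
  have "col_len (boundary (insert m mu)) (boundary (insert l lam)) = len"
    "base_ht (boundary (insert m mu)) = base(j := base j + 2)"
    using boundary_mu boundary_lam by (auto simp: fun_eq_iff col_len_def base_ht_def)
  then show ?thesis
    using ce_tiling_exists_iff_partitions[OF part_lam' part_mu'] insert_m_sub by auto
qed

lemma valley_run_exists: "\<exists>s e. valley_run len base j r s e"
proof -
  have "finite (col ` (lam - mu))" using partition_finite[OF part_lam] by simp
  moreover have "{c. r - 1 < len c} \<subseteq> col ` (lam - mu)"
  proof
    fix c assume "c \<in> {c. r - 1 < len c}"
    then have "cell (boundary mu) (r - 1) c \<in> lam - mu"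
      using r_pos by (simp add: diff_eq_skew[OF part_lam part_mu] cell_in_skew_iff)
    then show "c \<in> col ` (lam - mu)" by (metis col_cell imageI)
  qed
  ultimately have fin: "finite {c. r - 1 < len c}" by (rule finite_subset[rotated])
  have len_j: "len (j - 1) = r" "len j = r" "len (j + 1) = r"
    using boundary_mu boundary_lam by (auto simp: col_len_def)
  obtain s where s: "s \<le> j" "\<not> r - 1 < len (s - 1)" "\<forall>c'. s \<le> c' \<and> c' \<le> j \<longrightarrow> r - 1 < len c'"
    using maximal_interval_left[OF fin, of j] len_j by auto
  obtain e where e: "j \<le> e" "\<not> r - 1 < len (e + 1)" "\<forall>c'. j \<le> c' \<and> c' \<le> e \<longrightarrow> r - 1 < len c'"
    using maximal_interval_right[OF fin, of j] len_j by auto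
  have steps: "unit_descent (boundary mu)" "unit_descent (boundary lam)"
    using unit_descent_boundary part_mu part_lam by auto
  have "valley_run len base j r s e"
  proof
    fix c
    show "len c - len (c - 1) \<le> 1" "len (c - 1) - len c \<le> 1"
      "len c - len (c - 1) = 1 \<Longrightarrow> base (c - 1) = base c + 1"
      "len (c - 1) - len c = 1 \<Longrightarrow> base c = base (c - 1) + 1"
      using unit_descent_prevD[OF steps(1), of c] unit_descent_prevD[OF steps(2), of c]
      by (auto simp: col_len_def base_ht_def)
  next
    show "base (j - 1) = base j + 1" "base (j + 1) = base j + 1"
      using boundary_mu by (auto simp: base_ht_def)
  qed (use len_j r_pos s e in auto)
  then show ?thesis by blast
qed

lemma depth_a_eq:
  assumes "valley len base j r s" "ce_dyck_tiling T (lam - mu)" "t \<in> T" "a \<in> t"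
  shows "depth t a = base s - base j"
proof -
  interpret valley len base j r s by fact
  interpret skew_ce_tiling "boundary mu" "boundary lam" T
    using assms(2) unit_descent_boundary boundary_mono insert_m_sub part_lam part_mu
    by unfold_locales (auto simp: diff_eq_skew[symmetric])
  show ?thesis
    using depth_formula[OF assms(3,4), of s] a_eq_cell s_le_j len_before_s len_from_s by force
qed

lemma depth_one_iff:
  "(\<exists>T. ce_dyck_tiling T (lam - mu) \<and> (\<exists>t\<in>T. a \<in> t \<and> depth t a = 1))
   \<longleftrightarrow> (\<exists>T. ce_dyck_tiling T (lam - insert m mu))"
proof -
  obtain s e where run: "valley_run len base j r s e" using valley_run_exists by blast
  then interpret valley_run len base j r s e .
  note depth = depth_a_eq[OF valley_run.axioms(1)[OF run]]
  have "(\<exists>T. ce_dyck_tiling T (lam - mu) \<and> (\<exists>t\<in>T. a \<in> t \<and> depth t a = 1))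
        \<longleftrightarrow> left_cond len base \<and> right_cond len base \<and> base s = base j + 1"
    using ex_ce_tiling_depth_iff[OF depth a_mem, where P = "\<lambda>d. d = 1"] ce_lower_iff by auto
  also have "\<dots> \<longleftrightarrow> (\<exists>T. ce_dyck_tiling T (lam - insert m mu))"
    using conds_shrink_iff ce_shrink_iff by blast
  finally show ?thesis .
qed

lemma depth_gt_one_iff:
  "(\<exists>T. ce_dyck_tiling T (lam - mu) \<and> (\<exists>t\<in>T. a \<in> t \<and> depth t a > 1))
   \<longleftrightarrow> (\<exists>T. ce_dyck_tiling T (insert l lam - insert m mu))"
proof -
  obtain s e where run: "valley_run len base j r s e" using valley_run_exists by blast
  then interpret valley_run len base j r s e .
  note depth = depth_a_eq[OF valley_run.axioms(1)[OF run]]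
  have "(\<exists>T. ce_dyck_tiling T (lam - mu) \<and> (\<exists>t\<in>T. a \<in> t \<and> depth t a > 1))
        \<longleftrightarrow> left_cond len base \<and> right_cond len base \<and> base j + 2 \<le> base s"
    using ex_ce_tiling_depth_iff[OF depth a_mem, where P = "\<lambda>d. d > 1"] ce_lower_iff by auto
  also have "\<dots> \<longleftrightarrow> (\<exists>T. ce_dyck_tiling T (insert l lam - insert m mu))"
    using conds_raise_iff ce_raise_iff by blast
  finally show ?thesis .
qed

end

theorem proposition4p6:
  fixes j :: int and lam mu :: "node set" and l m :: node
  assumes "is_partition lam" and "is_partition mu"
    and "addable lam l" and "col l = j"
    and "addable mu m" and "col m = j"
    and "insert m mu \<subseteq> lam"
  shows "((\<exists>T. ce_dyck_tiling T (lam - mu) \<and>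
              (\<exists>t\<in>T. (fst l - 1, snd l - 1) \<in> t \<and> depth t (fst l - 1, snd l - 1) = 1))
          \<longleftrightarrow> (\<exists>T. ce_dyck_tiling T (lam - insert m mu)))
       \<and> ((\<exists>T. ce_dyck_tiling T (lam - mu) \<and>
              (\<exists>t\<in>T. (fst l - 1, snd l - 1) \<in> t \<and> depth t (fst l - 1, snd l - 1) > 1))
          \<longleftrightarrow> (\<exists>T. ce_dyck_tiling T (insert l lam - insert m mu)))"
proof -
  interpret addable_columns lam mu l m j using assms by unfold_locales
  show ?thesis using depth_one_iff depth_gt_one_iff by blast
qed

end
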